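(* Let $\mathcal{B}\models I\Sigma_1$ and $\mathcal{A}\subseteq\mathcal{B}$ an $L$-substructure with universe $A$. For $y,z\in A$ write $y\sim z$ if $|y-z|\in\mathbb{N}$ (standard). Let $\mathcal{O}$ be a $\langle 0,+,\dot{-},\cdot\rangle$-substructure of $\mathcal{A}$ such that every $\sim$-class of $A$ contains exactly one element of $\mathcal{O}$, denoted $O_y$ for $y$ in that class, and let $\varepsilon:\mathcal{O}\to M^{good}_{\mathbb{P}}(\mathcal{B})$ be a $\langle 0,+,\dot{-},\cdot\rangle$-homomorphism such that every diagonal entry $\varepsilon(Q)_{pp}$ with $0\neq Q\in\mathcal{O}$ is nonstandard. Define, for $y\in A$, $\varepsilon(y)=\varepsilon(O_y)+\delta_y I$, where $\delta_y=y-O_y\in\mathbb{Z}$ and $I$ is the identity matrix. Then $\varepsilon: A\to M^{good}_{\mathbb{P}}(\mathcal{B})$ is a semiring homomorphism.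
   Context: $L=\langle0,1,+,\cdot,\le\rangle$. $a\dot{-}b = a-b$ if $a\ge b$ and $0$ otherwise. $\mathbb{P}$ is the set of primes of $\mathcal{B}$. A $\mathbb{P}\times\mathbb{P}$-matrix $M$ over $B$ is good in $\mathcal{B}$ if for every $J\in B$ the set $\{(p,q,M_{pq}): q<J, M_{pq}\neq0\}$ is coded in $\mathcal{B}$ (via Gödel coding of finite sets in $I\Sigma_1$); $M^{good}_{\mathbb{P}}(\mathcal{B})$ is the semiring of such matrices with matrix addition and multiplication computed in $\mathcal{B}$. A semiring homomorphism preserves $0,1,+,\cdot$. *)

theory Defs
  imports Main
begin

record 'b Lstr =
  zer :: 'b
  on  :: 'b
  ad  :: "'b \<Rightarrow> 'b \<Rightarrow> 'b"
  mu  :: "'b \<Rightarrow> 'b \<Rightarrow> 'b"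
  le  :: "'b \<Rightarrow> 'b \<Rightarrow> bool"

text \<open>The universe of the structure B is the whole type 'b.\<close>

definition lt :: "'b Lstr \<Rightarrow> 'b \<Rightarrow> 'b \<Rightarrow> bool" where
  "lt B x y \<longleftrightarrow> le B x y \<and> x \<noteq> y"

datatype trm = Var nat | Zero | One | Plus trm trm | Times trm trm

datatype fm =
    Eq trm trm | Leq trm trm | Neg fm | Conj fm fm | Disj fm fm
  | Ex nat fm
  | BAll nat trm fm
  | BEx nat trm fm

fun evt :: "'b Lstr \<Rightarrow> (nat \<Rightarrow> 'b) \<Rightarrow> trm \<Rightarrow> 'b" where
  "evt B e (Var i) = e i"
| "evt B e Zero = zer B"
| "evt B e One = on B"
| "evt B e (Plus s t) = ad B (evt B e s) (evt B e t)"
| "evt B e (Times s t) = mu B (evt B e s) (evt B e t)"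

fun sat :: "'b Lstr \<Rightarrow> (nat \<Rightarrow> 'b) \<Rightarrow> fm \<Rightarrow> bool" where
  "sat B e (Eq s t) = (evt B e s = evt B e t)"
| "sat B e (Leq s t) = le B (evt B e s) (evt B e t)"
| "sat B e (Neg \<phi>) = (\<not> sat B e \<phi>)"
| "sat B e (Conj \<phi> \<psi>) = (sat B e \<phi> \<and> sat B e \<psi>)"
| "sat B e (Disj \<phi> \<psi>) = (sat B e \<phi> \<or> sat B e \<psi>)"
| "sat B e (Ex x \<phi>) = (\<exists>v. sat B (e(x := v)) \<phi>)"
| "sat B e (BAll x t \<phi>) = (\<forall>v. le B v (evt B e t) \<longrightarrow> sat B (e(x := v)) \<phi>)"
| "sat B e (BEx x t \<phi>) = (\<exists>v. le B v (evt B e t) \<and> sat B (e(x := v)) \<phi>)"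

fun delta0 :: "fm \<Rightarrow> bool" where
  "delta0 (Eq s t) = True"
| "delta0 (Leq s t) = True"
| "delta0 (Neg \<phi>) = delta0 \<phi>"
| "delta0 (Conj \<phi> \<psi>) = (delta0 \<phi> \<and> delta0 \<psi>)"
| "delta0 (Disj \<phi> \<psi>) = (delta0 \<phi> \<and> delta0 \<psi>)"
| "delta0 (Ex x \<phi>) = False"
| "delta0 (BAll x t \<phi>) = delta0 \<phi>"
| "delta0 (BEx x t \<phi>) = delta0 \<phi>"

inductive sigma1 :: "fm \<Rightarrow> bool" where
  "delta0 \<phi> \<Longrightarrow> sigma1 \<phi>"
| "sigma1 \<phi> \<Longrightarrow> sigma1 (Ex x \<phi>)"

definition PAminus :: "'b Lstr \<Rightarrow> bool" where
  "PAminus B \<longleftrightarrow>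
    (\<forall>x y z. ad B x (ad B y z) = ad B (ad B x y) z) \<and>
    (\<forall>x y. ad B x y = ad B y x) \<and>
    (\<forall>x y z. mu B x (mu B y z) = mu B (mu B x y) z) \<and>
    (\<forall>x y. mu B x y = mu B y x) \<and>
    (\<forall>x y z. mu B x (ad B y z) = ad B (mu B x y) (mu B x z)) \<and>
    (\<forall>x. ad B x (zer B) = x) \<and>
    (\<forall>x. mu B x (zer B) = zer B) \<and>
    (\<forall>x. mu B x (on B) = x) \<and>
    (\<forall>x. le B x x) \<and>
    (\<forall>x y. le B x y \<and> le B y x \<longrightarrow> x = y) \<and>
    (\<forall>x y z. le B x y \<and> le B y z \<longrightarrow> le B x z) \<and>
    (\<forall>x y. le B x y \<or> le B y x) \<and>
    (\<forall>x y z. le B x y \<longrightarrow> le B (ad B x z) (ad B y z)) \<and>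
    (\<forall>x y z. lt B (zer B) z \<and> lt B x y \<longrightarrow> lt B (mu B x z) (mu B y z)) \<and>
    (\<forall>x y. le B x y \<longrightarrow> (\<exists>z. ad B x z = y)) \<and>
    lt B (zer B) (on B) \<and>
    (\<forall>x. le B (zer B) x) \<and>
    (\<forall>x. lt B (zer B) x \<longrightarrow> le B (on B) x)"

definition ISigma1 :: "'b Lstr \<Rightarrow> bool" where
  "ISigma1 B \<longleftrightarrow> PAminus B \<and>
    (\<forall>\<phi> x e. sigma1 \<phi> \<longrightarrow>
       sat B (e(x := zer B)) \<phi> \<longrightarrow>
       (\<forall>v. sat B (e(x := v)) \<phi> \<longrightarrow> sat B (e(x := ad B v (on B))) \<phi>) \<longrightarrow>
       (\<forall>v. sat B (e(x := v)) \<phi>))"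

definition substr :: "'b Lstr \<Rightarrow> 'b set \<Rightarrow> bool" where
  "substr B A \<longleftrightarrow> zer B \<in> A \<and> on B \<in> A \<and>
     (\<forall>x\<in>A. \<forall>y\<in>A. ad B x y \<in> A \<and> mu B x y \<in> A)"

definition num :: "'b Lstr \<Rightarrow> nat \<Rightarrow> 'b" where
  "num B n = ((\<lambda>x. ad B x (on B)) ^^ n) (zer B)"

definition standard :: "'b Lstr \<Rightarrow> 'b \<Rightarrow> bool" where
  "standard B x \<longleftrightarrow> (\<exists>n. x = num B n)"

definition simB :: "'b Lstr \<Rightarrow> 'b \<Rightarrow> 'b \<Rightarrow> bool" where
  "simB B y z \<longleftrightarrow> (\<exists>n. y = ad B z (num B n) \<or> z = ad B y (num B n))"

definition monus :: "'b Lstr \<Rightarrow> 'b \<Rightarrow> 'b \<Rightarrow> 'b" where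
  "monus B x y = (if le B y x then (THE d. ad B y d = x) else zer B)"

definition modB :: "'b Lstr \<Rightarrow> 'b \<Rightarrow> 'b \<Rightarrow> 'b" where
  "modB B a m = (THE r. lt B r m \<and> (\<exists>q. a = ad B (mu B q m) r))"

definition beta :: "'b Lstr \<Rightarrow> 'b \<Rightarrow> 'b \<Rightarrow> 'b \<Rightarrow> 'b" where
  "beta B a c i = modB B a (ad B (on B) (mu B (ad B i (on B)) c))"

definition coded :: "'b Lstr \<Rightarrow> 'b set \<Rightarrow> bool" where
  "coded B S \<longleftrightarrow> (\<exists>a c n. S = {x. \<exists>i. lt B i n \<and> x = beta B a c i})"

definition cpair :: "'b Lstr \<Rightarrow> 'b \<Rightarrow> 'b \<Rightarrow> 'b" where
  "cpair B x y = (THE z. ad B z z =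
      ad B (mu B (ad B x y) (ad B (ad B x y) (on B))) (ad B y y))"

definition triple :: "'b Lstr \<Rightarrow> 'b \<Rightarrow> 'b \<Rightarrow> 'b \<Rightarrow> 'b" where
  "triple B x y z = cpair B x (cpair B y z)"

definition primeB :: "'b Lstr \<Rightarrow> 'b \<Rightarrow> bool" where
  "primeB B p \<longleftrightarrow> lt B (on B) p \<and> (\<forall>d e. mu B d e = p \<longrightarrow> d = on B \<or> d = p)"

text \<open>A P x P matrix is represented as a function 'b => 'b => 'b whose entries
  outside P x P are 0 (canonical representative).\<close>

type_synonym 'b mat = "'b \<Rightarrow> 'b \<Rightarrow> 'b"

definition good :: "'b Lstr \<Rightarrow> 'b mat \<Rightarrow> bool" where
  "good B M \<longleftrightarrow>
     (\<forall>p q. \<not> (primeB B p \<and> primeB B q) \<longrightarrow> M p q = zer B) \<and>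
     (\<forall>J. coded B {triple B p q (M p q) | p q.
                    primeB B p \<and> primeB B q \<and> lt B q J \<and> M p q \<noteq> zer B})"

definition mzero :: "'b Lstr \<Rightarrow> 'b mat" where
  "mzero B = (\<lambda>p q. zer B)"

definition mid :: "'b Lstr \<Rightarrow> 'b mat" where
  "mid B = (\<lambda>p q. if primeB B p \<and> p = q then on B else zer B)"

definition madd :: "'b Lstr \<Rightarrow> 'b mat \<Rightarrow> 'b mat \<Rightarrow> 'b mat" where
  "madd B M N = (\<lambda>p q. ad B (M p q) (N p q))"

definition mmonus :: "'b Lstr \<Rightarrow> 'b mat \<Rightarrow> 'b mat \<Rightarrow> 'b mat" where
  "mmonus B M N = (\<lambda>p q. monus B (M p q) (N p q))"

text \<open>Internal sum in B: s = sum_{i<K} g(i), witnessed by a beta-coded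
  sequence of partial sums.\<close>
definition bsum :: "'b Lstr \<Rightarrow> ('b \<Rightarrow> 'b) \<Rightarrow> 'b \<Rightarrow> 'b \<Rightarrow> bool" where
  "bsum B g K s \<longleftrightarrow> (\<exists>a c. beta B a c (zer B) = zer B \<and>
      (\<forall>i. lt B i K \<longrightarrow> beta B a c (ad B i (on B)) = ad B (beta B a c i) (g i)) \<and>
      beta B a c K = s)"

text \<open>Matrix product computed in B: (MN)_{pq} = sum over primes r of M_{pr} N_{rq},
  an internal (B-finite) sum since column q of N has B-finite support.\<close>
definition mmul :: "'b Lstr \<Rightarrow> 'b mat \<Rightarrow> 'b mat \<Rightarrow> 'b mat" where
  "mmul B M N = (\<lambda>p q. if primeB B p \<and> primeB B q then
      (THE s. \<exists>K. (\<forall>r. N r q \<noteq> zer B \<longrightarrow> lt B r K) \<and>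
          bsum B (\<lambda>r. if primeB B r then mu B (M p r) (N r q) else zer B) K s)
     else zer B)"

definition Oof :: "'b Lstr \<Rightarrow> 'b set \<Rightarrow> 'b \<Rightarrow> 'b" where
  "Oof B Os y = (THE w. w \<in> Os \<and> simB B y w)"

text \<open>eps(y) = eps(O_y) + delta_y I with delta_y = y - O_y an integer:
  on the diagonal add (y - O_y) if O_y <= y, subtract (O_y - y) otherwise.\<close>
definition ext_eps :: "'b Lstr \<Rightarrow> 'b set \<Rightarrow> ('b \<Rightarrow> 'b mat) \<Rightarrow> 'b \<Rightarrow> 'b mat" where
  "ext_eps B Os eps y = (let w = Oof B Os y in
     (\<lambda>p q. if primeB B p \<and> p = q then
               (if le B w y then ad B (eps w p p) (monus B y w)
                else monus B (eps w p p) (monus B w y))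
             else eps w p q))"

end

theory Submission
  imports Defs
begin

(* Write y = O_y + d_y with d_y a standard integer. Additivity of the extension is additivity of
   the given homomorphism plus additivity of d. For products, (O_y + a)(O_z + c) differs from
   O_y O_z + c O_y + a O_z by the standard integer ac; that combination lies in O (negative
   coefficients are handled by truncated subtraction, which is exact because nonzero elements of
   O are nonstandard), hence it is O_{yz}. Its image under the homomorphism is
   eps(O_y) eps(O_z) + c eps(O_y) + a eps(O_z), which agrees with eps(y) eps(z) - ac I because an
   internal sum perturbed at a single index changes only by the perturbation; subtracting a
   standard integer on the diagonal is again exact because the diagonal entries are nonstandard.
   Goodness of eps(y) holds because its set of nonzero entries is bounded and Delta_0-definable
   from that of eps(O_y), and in I Sigma_1 bounded Delta_0-definable sets are coded. *)

section \<open>Arithmetic in a model of I\<Sigma>1\<close>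

locale isigma1_model =
  fixes B :: "'b Lstr"
  assumes ISigma1: "ISigma1 B" and nontrivial: "\<exists>x. lt B (on B) x"
begin

abbreviation pl (infixl "\<oplus>" 65) where "x \<oplus> y \<equiv> ad B x y"
abbreviation tm (infixl "\<otimes>" 70) where "x \<otimes> y \<equiv> mu B x y"
abbreviation leB (infix "\<preceq>" 50) where "x \<preceq> y \<equiv> le B x y"
abbreviation ltB (infix "\<prec>" 50) where "x \<prec> y \<equiv> lt B x y"
abbreviation z0 ("\<zero>") where "\<zero> \<equiv> zer B"
abbreviation o1 ("\<one>") where "\<one> \<equiv> on B"

lemma PAminus_B: "PAminus B" using ISigma1 unfolding ISigma1_def by blast

lemma add_assoc: "x \<oplus> y \<oplus> z = x \<oplus> (y \<oplus> z)" using PAminus_B unfolding PAminus_def by metis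
lemma add_comm: "x \<oplus> y = y \<oplus> x" using PAminus_B unfolding PAminus_def by metis
lemma mul_assoc: "x \<otimes> y \<otimes> z = x \<otimes> (y \<otimes> z)" using PAminus_B unfolding PAminus_def by metis
lemma mul_comm: "x \<otimes> y = y \<otimes> x" using PAminus_B unfolding PAminus_def by metis
lemma distl: "x \<otimes> (y \<oplus> z) = x \<otimes> y \<oplus> x \<otimes> z" using PAminus_B unfolding PAminus_def by metis
lemma add0: "x \<oplus> \<zero> = x" using PAminus_B unfolding PAminus_def by metis
lemma add0l: "\<zero> \<oplus> x = x" using add0 add_comm by metis
lemma mul0: "x \<otimes> \<zero> = \<zero>" using PAminus_B unfolding PAminus_def by metis
lemma mul1: "x \<otimes> \<one> = x" using PAminus_B unfolding PAminus_def by metis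
lemma le_refl: "x \<preceq> x" using PAminus_B unfolding PAminus_def by metis
lemma le_antisym: "x \<preceq> y \<Longrightarrow> y \<preceq> x \<Longrightarrow> x = y" using PAminus_B unfolding PAminus_def by metis
lemma le_trans: "x \<preceq> y \<Longrightarrow> y \<preceq> z \<Longrightarrow> x \<preceq> z" using PAminus_B unfolding PAminus_def by metis
lemma le_lin: "x \<preceq> y \<or> y \<preceq> x" using PAminus_B unfolding PAminus_def by metis
lemma le_addr: "x \<preceq> y \<Longrightarrow> x \<oplus> z \<preceq> y \<oplus> z" using PAminus_B unfolding PAminus_def by metis
lemma lt_mulr: "\<zero> \<prec> z \<Longrightarrow> x \<prec> y \<Longrightarrow> x \<otimes> z \<prec> y \<otimes> z"
  using PAminus_B unfolding PAminus_def by metis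
lemma le_ex: "x \<preceq> y \<Longrightarrow> \<exists>z. x \<oplus> z = y" using PAminus_B unfolding PAminus_def by metis
lemma zero_lt_one: "\<zero> \<prec> \<one>" using PAminus_B unfolding PAminus_def by metis
lemma zero_le: "\<zero> \<preceq> x" using PAminus_B unfolding PAminus_def by metis
lemma pos_ge1: "\<zero> \<prec> x \<Longrightarrow> \<one> \<preceq> x" using PAminus_B unfolding PAminus_def by metis

lemma sigma1_induct:
  assumes "sigma1 \<phi>" and "\<And>v. sat B (e(x := v)) \<phi> = P v"
    and "P \<zero>" and "\<And>v. P v \<Longrightarrow> P (v \<oplus> \<one>)"
  shows "P v"
  using ISigma1 assms unfolding ISigma1_def by (metis fun_upd_upd)

lemma le_add_self: "x \<preceq> x \<oplus> y"
proof -
  have "\<zero> \<oplus> x \<preceq> y \<oplus> x" by (rule le_addr[OF zero_le])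
  thus ?thesis by (simp only: add0l add_comm[of y x])
qed

lemma le_add_ex: "x \<preceq> y \<longleftrightarrow> (\<exists>z. y = x \<oplus> z)"
  using le_ex le_add_self by metis

text \<open>This needs \<open>nontrivial\<close>: the two-element Boolean semiring, where \<open>1 + 1 = 1\<close>, satisfies
  \<open>ISigma1\<close> as formalised. A fixed point of the successor absorbs every element by induction, so
  it is the largest element, contradicting \<open>a < a * a\<close> for \<open>a > 1\<close>.\<close>

lemma succ_neq_self: "a \<oplus> \<one> \<noteq> a"
proof
  assume succ_eq: "a \<oplus> \<one> = a"
  have all: "a \<oplus> v = a" for v
  proof (rule sigma1_induct[where \<phi> = "Eq (Plus (Var 1) (Var 0)) (Var 1)" and e = "(\<lambda>_. \<zero>)(1 := a)" and x = 0 and P = "\<lambda>v. a \<oplus> v = a"])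
    show "sigma1 (Eq (Plus (Var 1) (Var 0)) (Var 1))" by (auto intro: sigma1.intros)
  qed (auto simp: add0 add_assoc[symmetric] succ_eq)
  have top: "v \<preceq> a" for v
  proof -
    have "\<zero> \<oplus> v \<preceq> a \<oplus> v" by (rule le_addr[OF zero_le])
    thus ?thesis using all[of v] by (simp add: add0l)
  qed
  obtain t where t: "\<one> \<prec> t" using nontrivial by blast
  have "\<one> \<prec> a" using t top[of t] le_trans unfolding lt_def by (metis le_antisym)
  moreover have "\<zero> \<prec> a" using zero_lt_one \<open>\<one> \<prec> a\<close> le_trans unfolding lt_def by (metis le_antisym)
  ultimately have "\<one> \<otimes> a \<prec> a \<otimes> a" using lt_mulr by blast
  hence "a \<prec> a \<otimes> a" by (simp add: mul_comm mul1)
  thus False using top[of "a \<otimes> a"] le_antisym unfolding lt_def by blast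
qed

lemma lt_imp_succ_le: "x \<prec> y \<Longrightarrow> x \<oplus> \<one> \<preceq> y"
proof -
  assume "x \<prec> y"
  then obtain d where d: "y = x \<oplus> d" "d \<noteq> \<zero>" using le_add_ex unfolding lt_def by (metis add0)
  hence "\<one> \<preceq> d" using pos_ge1 zero_le unfolding lt_def by metis
  hence "\<one> \<oplus> x \<preceq> d \<oplus> x" by (rule le_addr)
  thus ?thesis using d by (simp add: add_comm)
qed

lemma succ_inj: assumes "x \<oplus> \<one> = y \<oplus> \<one>" shows "x = y"
proof (rule ccontr)
  assume ne: "x \<noteq> y"
  have "\<exists>a. a \<oplus> \<one> = a"
  proof (cases "x \<preceq> y")
    case True
    hence "x \<prec> y" using ne unfolding lt_def by simp
    hence "x \<oplus> \<one> \<oplus> \<one> \<preceq> y \<oplus> \<one>" by (rule le_addr[OF lt_imp_succ_le])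
    hence "x \<oplus> \<one> \<oplus> \<one> \<preceq> x \<oplus> \<one>" using assms by simp
    moreover have "x \<oplus> \<one> \<preceq> x \<oplus> \<one> \<oplus> \<one>" by (rule le_add_self)
    ultimately show ?thesis by (blast intro: le_antisym)
  next
    case False
    hence "y \<prec> x" using ne le_lin[of x y] unfolding lt_def by auto
    hence "y \<oplus> \<one> \<oplus> \<one> \<preceq> x \<oplus> \<one>" by (rule le_addr[OF lt_imp_succ_le])
    hence "y \<oplus> \<one> \<oplus> \<one> \<preceq> y \<oplus> \<one>" using assms by simp
    moreover have "y \<oplus> \<one> \<preceq> y \<oplus> \<one> \<oplus> \<one>" by (rule le_add_self)
    ultimately show ?thesis by (blast intro: le_antisym)
  qed
  thus False using succ_neq_self by blast
qed

lemma add_cancel_right: "x \<oplus> z = y \<oplus> z \<Longrightarrow> x = y"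
proof -
  have "x \<oplus> z = y \<oplus> z \<longrightarrow> x = y" for z
  proof (rule sigma1_induct[where \<phi> = "Disj (Neg (Eq (Plus (Var 1) (Var 0)) (Plus (Var 2) (Var 0)))) (Eq (Var 1) (Var 2))"
      and e = "(\<lambda>_. \<zero>)(1 := x, 2 := y)" and x = 0 and P = "\<lambda>z. x \<oplus> z = y \<oplus> z \<longrightarrow> x = y"])
    show "sigma1 (Disj (Neg (Eq (Plus (Var 1) (Var 0)) (Plus (Var 2) (Var 0)))) (Eq (Var 1) (Var 2)))"
      by (auto intro: sigma1.intros)
  next
    fix v assume "x \<oplus> v = y \<oplus> v \<longrightarrow> x = y"
    show "x \<oplus> (v \<oplus> \<one>) = y \<oplus> (v \<oplus> \<one>) \<longrightarrow> x = y"
    proof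
      assume "x \<oplus> (v \<oplus> \<one>) = y \<oplus> (v \<oplus> \<one>)"
      hence "x \<oplus> v \<oplus> \<one> = y \<oplus> v \<oplus> \<one>" by (simp add: add_assoc)
      hence "x \<oplus> v = y \<oplus> v" by (rule succ_inj)
      thus "x = y" using \<open>x \<oplus> v = y \<oplus> v \<longrightarrow> x = y\<close> by blast
    qed
  qed (auto simp: add0)
  thus "x \<oplus> z = y \<oplus> z \<Longrightarrow> x = y" by blast
qed

lemma add_cancel_left: "z \<oplus> x = z \<oplus> y \<Longrightarrow> x = y"
  by (rule add_cancel_right[of x z y]) (simp only: add_comm[of _ z])

lemma monus_eq: "y \<oplus> d = x \<Longrightarrow> monus B x y = d"
proof -
  assume h: "y \<oplus> d = x"
  hence "y \<preceq> x" using le_add_self by blast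
  hence "monus B x y = (THE d. y \<oplus> d = x)" unfolding monus_def by simp
  also have "\<dots> = d" using h add_cancel_left by blast
  finally show ?thesis .
qed

lemma monus_le: "x \<preceq> y \<Longrightarrow> monus B x y = \<zero>"
proof -
  assume "x \<preceq> y"
  show ?thesis
  proof (cases "y \<preceq> x")
    case True hence "x = y" using \<open>x \<preceq> y\<close> le_antisym by blast
    thus ?thesis using monus_eq[of y \<zero> x] add0 by simp
  next
    case False thus ?thesis unfolding monus_def by simp
  qed
qed

lemma add_le_cancel: "x \<oplus> z \<preceq> y \<oplus> z \<Longrightarrow> x \<preceq> y"
proof (rule ccontr)
  assume h: "x \<oplus> z \<preceq> y \<oplus> z" "\<not> x \<preceq> y"
  hence "y \<preceq> x" using le_lin by blast
  hence "y \<oplus> z \<preceq> x \<oplus> z" by (rule le_addr)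
  hence "y \<oplus> z = x \<oplus> z" using h(1) le_antisym by blast
  hence "x = y" using add_cancel_right[of y z x] by simp
  thus False using h(2) le_refl by simp
qed

lemma mul_le_mono: "x \<preceq> y \<Longrightarrow> x \<otimes> z \<preceq> y \<otimes> z"
proof -
  assume h: "x \<preceq> y"
  show ?thesis
  proof (cases "x = y \<or> z = \<zero>")
    case True thus ?thesis using le_refl mul0 by auto
  next
    case False
    hence "\<zero> \<prec> z" "x \<prec> y" using zero_le h unfolding lt_def by auto
    thus ?thesis using lt_mulr unfolding lt_def by blast
  qed
qed

lemma monus_add: "monus B (a \<oplus> b) a = b" by (rule monus_eq) simp

lemma monus_monus: "monus B (monus B a b) c = monus B a (b \<oplus> c)"
proof (cases "b \<preceq> a")
  case True
  then obtain d where d: "a = b \<oplus> d" using le_add_ex by blast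
  hence md: "monus B a b = d" using monus_eq by simp
  show ?thesis
  proof (cases "c \<preceq> d")
    case True
    then obtain e where e: "d = c \<oplus> e" using le_add_ex by blast
    hence "monus B d c = e" using monus_eq by simp
    moreover have "monus B a (b \<oplus> c) = e" using d e by (intro monus_eq) (simp add: add_assoc)
    ultimately show ?thesis using md by simp
  next
    case False
    hence "d \<preceq> c" using le_lin by blast
    hence "b \<oplus> d \<preceq> b \<oplus> c" using le_addr[of d c b] by (simp only: add_comm[of _ b])
    thus ?thesis using md d monus_le \<open>d \<preceq> c\<close> by simp
  qed
next
  case False
  hence "a \<preceq> b" using le_lin by blast
  hence "a \<preceq> b \<oplus> c" using le_add_self le_trans by blast
  moreover have "monus B a b = \<zero>" using \<open>a \<preceq> b\<close> monus_le by blast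
  ultimately show ?thesis using monus_le zero_le by simp
qed

lemma less_le_not_le': "x \<prec> y \<longleftrightarrow> x \<preceq> y \<and> \<not> y \<preceq> x"
  unfolding lt_def using le_antisym le_refl by blast

lemma add_left_mono': "a \<preceq> b \<Longrightarrow> c \<oplus> a \<preceq> c \<oplus> b"
  using le_addr[of a b c] by (simp only: add_comm[of _ c])

lemma add_le_imp_le_left': "c \<oplus> a \<preceq> c \<oplus> b \<Longrightarrow> a \<preceq> b"
  by (rule add_le_cancel[of a c b]) (simp only: add_comm[of _ c])

lemma mul_left_strict: "a \<prec> b \<Longrightarrow> \<zero> \<prec> c \<Longrightarrow> c \<otimes> a \<prec> c \<otimes> b"
  using lt_mulr[of c a b] by (simp only: mul_comm[of _ c])

lemma mul0l: "\<zero> \<otimes> x = \<zero>" using mul0[of x] by (simp only: mul_comm[of x])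
lemma mul1l: "\<one> \<otimes> x = x" using mul1[of x] by (simp only: mul_comm[of x])
lemma distr: "(y \<oplus> z) \<otimes> x = y \<otimes> x \<oplus> z \<otimes> x" using distl[of x y z] by (simp only: mul_comm[of x])

lemma no_zero_div: "a \<noteq> \<zero> \<Longrightarrow> b \<noteq> \<zero> \<Longrightarrow> a \<otimes> b \<noteq> \<zero>"
proof -
  assume "a \<noteq> \<zero>" "b \<noteq> \<zero>"
  hence "\<zero> \<prec> a" "\<zero> \<prec> b" using zero_le unfolding lt_def by auto
  hence "\<zero> \<otimes> b \<prec> a \<otimes> b" using lt_mulr by blast
  thus ?thesis using mul0l unfolding lt_def by auto
qed

lemma mul_monus: "a \<otimes> monus B b c = monus B (a \<otimes> b) (a \<otimes> c)"
proof (cases "c \<preceq> b")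
  case True
  then obtain d where "b = c \<oplus> d" using le_add_ex by blast
  thus ?thesis using monus_eq[of "a \<otimes> c" "a \<otimes> d" "a \<otimes> b"] monus_eq[of c d b] distl by simp
next
  case False
  hence "b \<preceq> c" using le_lin by blast
  hence "a \<otimes> b \<preceq> a \<otimes> c" using mul_le_mono[of b c a] by (simp only: mul_comm[of _ a])
  thus ?thesis using monus_le \<open>b \<preceq> c\<close> mul0 by simp
qed

lemma monus_add_inv: "b \<preceq> a \<Longrightarrow> monus B a b \<oplus> b = a"
proof -
  assume "b \<preceq> a" then obtain d where "a = b \<oplus> d" using le_add_ex by blast
  thus ?thesis using monus_eq[of b d a] by (simp add: add_comm[of d b])
qed

lemma zero_ne_one: "\<zero> \<noteq> \<one>" using zero_lt_one unfolding lt_def by simp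

sublocale R: linordered_semidom "ad B" "monus B" "le B" "lt B" "zer B" "mu B" "on B"
  apply unfold_locales
  apply (fact add0l add_assoc add_comm monus_add monus_monus less_le_not_le' le_refl add_left_mono' add_le_imp_le_left' mul_left_strict mul_assoc mul_comm mul0l mul1l distr no_zero_div mul_monus monus_add_inv zero_ne_one zero_lt_one le_trans le_antisym le_lin mul0 mul1 distl)+
  done
end

fun trm_vars :: "trm \<Rightarrow> nat set" where
  "trm_vars (Var i) = {i}" | "trm_vars Zero = {}" | "trm_vars One = {}"
| "trm_vars (Plus s t) = trm_vars s \<union> trm_vars t" | "trm_vars (Times s t) = trm_vars s \<union> trm_vars t"

lemma evt_upd[simp]: "k \<notin> trm_vars t \<Longrightarrow> evt B (e(k:=w)) t = evt B e t"
  by (induction t) auto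

definition fLt :: "trm \<Rightarrow> trm \<Rightarrow> fm" where
  "fLt s t = Conj (Leq s t) (Neg (Eq s t))"

definition beta_mod_trm :: "trm \<Rightarrow> trm \<Rightarrow> trm" where
  "beta_mod_trm c i = Plus One (Times (Plus i One) c)"

definition fBeta :: "trm \<Rightarrow> trm \<Rightarrow> trm \<Rightarrow> trm \<Rightarrow> nat \<Rightarrow> fm" where
  "fBeta a c i v k = Conj (fLt v (beta_mod_trm c i)) (BEx k a (Eq a (Plus (Times (Var k) (beta_mod_trm c i)) v)))"

lemma delta0_fLt[simp]: "delta0 (fLt s t)" by (simp add: fLt_def)
lemma delta0_fBeta[simp]: "delta0 (fBeta a c i v k)" by (simp add: fBeta_def)
lemma trm_vars_beta_mod_trm[simp]: "trm_vars (beta_mod_trm c i) = trm_vars c \<union> trm_vars i" by (auto simp: beta_mod_trm_def)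
lemma sat_fLt[simp]: "sat B e (fLt s t) = lt B (evt B e s) (evt B e t)" by (simp add: fLt_def lt_def)
lemma evt_beta_mod_trm[simp]: "evt B e (beta_mod_trm c i) = ad B (on B) (mu B (ad B (evt B e i) (on B)) (evt B e c))"
  by (simp add: beta_mod_trm_def)

section \<open>Numerals, division and the \<beta>-function\<close>

context isigma1_model begin

lemmas semiring_simps = R.add_ac R.mult_ac R.distrib_left R.distrib_right add0 add0l mul1 mul1l mul0 mul0l

lemma sigma1_delta0: "delta0 \<phi> \<Longrightarrow> sigma1 \<phi>" by (rule sigma1.intros)
lemma sigma1_Ex: "sigma1 \<phi> \<Longrightarrow> sigma1 (Ex x \<phi>)" by (rule sigma1.intros)

lemma lt_succ_iff: "x \<prec> y \<oplus> \<one> \<longleftrightarrow> x \<preceq> y"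
proof
  assume h: "x \<prec> y \<oplus> \<one>"
  show "x \<preceq> y"
  proof (rule ccontr)
    assume "\<not> x \<preceq> y"
    hence "y \<prec> x" using R.not_le by blast
    hence "y \<oplus> \<one> \<preceq> x" by (rule lt_imp_succ_le)
    thus False using h by (simp add: R.not_le[symmetric])
  qed
next
  assume "x \<preceq> y"
  moreover have "y \<prec> y \<oplus> \<one>" using zero_lt_one R.add_strict_left_mono[of \<zero> \<one> y] by (simp add: add0)
  ultimately show "x \<prec> y \<oplus> \<one>" by (rule R.le_less_trans)
qed

lemma le_succ_cases: "x \<preceq> y \<oplus> \<one> \<Longrightarrow> x \<preceq> y \<or> x = y \<oplus> \<one>"
  using lt_succ_iff R.le_less by blast

lemma pos_iff: "\<zero> \<prec> x \<longleftrightarrow> x \<noteq> \<zero>" using zero_le R.le_less by auto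

lemma le_add_self2: "y \<preceq> x \<oplus> y" using le_add_self[of y x] by (simp only: add_comm[of y x])

lemma succ_nz: "x \<oplus> \<one> \<noteq> \<zero>"
proof
  assume h: "x \<oplus> \<one> = \<zero>"
  have "\<one> \<preceq> x \<oplus> \<one>" by (rule le_add_self2)
  hence "\<one> \<preceq> \<zero>" using h by simp
  thus False using zero_lt_one by (simp add: R.not_le[symmetric])
qed

lemma num0[simp]: "num B 0 = \<zero>" by (simp add: num_def)
lemma numS[simp]: "num B (Suc n) = num B n \<oplus> \<one>" by (simp add: num_def)
lemma num1: "num B 1 = \<one>" by (simp add: add0l)
lemma num_add: "num B (m + n) = num B m \<oplus> num B n"
  by (induction n) (simp_all add: add0 add_assoc)
lemma num_mult: "num B (m * n) = num B m \<otimes> num B n"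
  by (induction n) (simp_all add: num_add mul0 distl mul1 add_comm)

lemma le_num_standard: "x \<preceq> num B n \<Longrightarrow> standard B x"
proof (induction n arbitrary: x)
  case 0 thus ?case using le_antisym zero_le unfolding standard_def by (metis num0)
next
  case (Suc n)
  from Suc.prems have "x \<preceq> num B n \<or> x = num B (Suc n)" using le_succ_cases by simp
  thus ?case
  proof
    assume "x \<preceq> num B n" thus ?thesis by (rule Suc.IH)
  next
    assume "x = num B (Suc n)" thus ?thesis unfolding standard_def by blast
  qed
qed

lemma le_num_eq_num: "x \<preceq> num B n \<Longrightarrow> \<exists>m. x = num B m"
  using le_num_standard unfolding standard_def by blast

lemma standard_add: "standard B x \<Longrightarrow> standard B y \<Longrightarrow> standard B (x \<oplus> y)"
  unfolding standard_def by (auto simp: num_add[symmetric])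

lemma num_nonzero: "a \<noteq> 0 \<Longrightarrow> num B a \<noteq> \<zero>"
  by (cases a) (auto simp: succ_nz)

lemma num_lt_nonstandard: "\<not> standard B x \<Longrightarrow> num B n \<prec> x"
proof -
  assume ns: "\<not> standard B x"
  show ?thesis
  proof (rule ccontr)
    assume "\<not> num B n \<prec> x"
    hence "x \<preceq> num B n" using R.not_less by blast
    thus False using le_num_standard ns by blast
  qed
qed

lemma div_exists: "m \<noteq> \<zero> \<Longrightarrow> \<exists>q r. r \<prec> m \<and> a = q \<otimes> m \<oplus> r"
proof -
  assume m: "m \<noteq> \<zero>"
  show ?thesis
  proof (rule sigma1_induct[where \<phi> = "Ex 2 (Ex 3 (Conj (fLt (Var 3) (Var 1)) (Eq (Var 0) (Plus (Times (Var 2) (Var 1)) (Var 3)))))"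
      and e = "(\<lambda>_. \<zero>)(1 := m)" and x = 0 and P = "\<lambda>a. \<exists>q r. r \<prec> m \<and> a = q \<otimes> m \<oplus> r"])
    show "sigma1 (Ex 2 (Ex 3 (Conj (fLt (Var 3) (Var 1)) (Eq (Var 0) (Plus (Times (Var 2) (Var 1)) (Var 3))))))"
      by (intro sigma1_Ex sigma1_delta0) simp
    show "\<exists>q r. r \<prec> m \<and> \<zero> = q \<otimes> m \<oplus> r" using m pos_iff by (intro exI[of _ \<zero>]) (simp add: mul0l add0)
    fix v assume "\<exists>q r. r \<prec> m \<and> v = q \<otimes> m \<oplus> r"
    then obtain q r where qr: "r \<prec> m" "v = q \<otimes> m \<oplus> r" by blast
    hence "r \<oplus> \<one> \<preceq> m" using lt_imp_succ_le qr(1) by blast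
    hence "r \<oplus> \<one> \<prec> m \<or> r \<oplus> \<one> = m" using R.le_less by blast
    thus "\<exists>q r. r \<prec> m \<and> v \<oplus> \<one> = q \<otimes> m \<oplus> r"
    proof
      assume "r \<oplus> \<one> \<prec> m"
      moreover have "v \<oplus> \<one> = q \<otimes> m \<oplus> (r \<oplus> \<one>)" using qr by (simp add: add_assoc)
      ultimately show ?thesis by blast
    next
      assume h: "r \<oplus> \<one> = m"
      have "v \<oplus> \<one> = (q \<oplus> \<one>) \<otimes> (r \<oplus> \<one>) \<oplus> \<zero>" using qr(2) unfolding h[symmetric] by (simp add: semiring_simps)
      hence "v \<oplus> \<one> = (q \<oplus> \<one>) \<otimes> m \<oplus> \<zero>" using h by simp
      moreover have "\<zero> \<prec> m" using m pos_iff by blast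
      ultimately show ?thesis by blast
    qed
  qed simp
qed

lemma div_unique:
  assumes "r \<prec> m" "r' \<prec> m" "q \<otimes> m \<oplus> r = q' \<otimes> m \<oplus> r'"
  shows "q = q' \<and> r = r'"
proof -
  have *: False if hh: "q1 \<prec> q2" "r1 \<prec> m" "q1 \<otimes> m \<oplus> r1 = q2 \<otimes> m \<oplus> r2" for q1 q2 r1 r2
  proof -
    obtain d where d: "q2 = q1 \<oplus> d" using hh(1) le_add_ex R.less_imp_le by blast
    have "d \<noteq> \<zero>" using d hh(1) by (auto simp: add0)
    hence "\<one> \<preceq> d" using pos_ge1 pos_iff by blast
    hence "\<one> \<otimes> m \<preceq> d \<otimes> m" by (rule mul_le_mono)
    hence "m \<preceq> d \<otimes> m" by (simp add: mul1l)
    hence "q1 \<otimes> m \<oplus> m \<preceq> q1 \<otimes> m \<oplus> d \<otimes> m \<oplus> r2"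
      using R.add_left_mono R.order_trans le_add_self by (metis add_assoc)
    also have "\<dots> = q1 \<otimes> m \<oplus> r1" using hh(3) d by (simp add: semiring_simps)
    finally have "m \<preceq> r1" using R.add_le_cancel_left by blast
    thus False using hh(2) by (simp add: R.not_le[symmetric])
  qed
  have "q = q'" using *[of q q' r r'] *[of q' q r' r] assms R.linorder_cases[of q q'] by metis
  thus ?thesis using assms(3) R.add_left_cancel by blast
qed

lemma modB_eq: "r \<prec> m \<Longrightarrow> a = q \<otimes> m \<oplus> r \<Longrightarrow> modB B a m = r"
  unfolding modB_def
  by (rule the_equality) (auto dest: div_unique)

lemma modB_prop: "m \<noteq> \<zero> \<Longrightarrow> modB B a m \<prec> m \<and> (\<exists>q. a = q \<otimes> m \<oplus> modB B a m)"
  using div_exists modB_eq by metis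

lemma modB_le: "m \<noteq> \<zero> \<Longrightarrow> modB B a m \<preceq> a"
  using modB_prop le_add_self by (metis add_comm)

lemma modB_add_mult: "m \<noteq> \<zero> \<Longrightarrow> modB B (x \<oplus> y \<otimes> m) m = modB B x m"
proof -
  assume m: "m \<noteq> \<zero>"
  then obtain q where q: "x = q \<otimes> m \<oplus> modB B x m" "modB B x m \<prec> m" using modB_prop by blast
  define r where "r = modB B x m"
  have "x \<oplus> y \<otimes> m = (q \<oplus> y) \<otimes> m \<oplus> r" using q(1) unfolding r_def[symmetric] by (simp add: semiring_simps)
  hence "x \<oplus> y \<otimes> m = (q \<oplus> y) \<otimes> m \<oplus> modB B x m" by (simp add: r_def)
  thus ?thesis using q modB_eq by blast
qed

lemma modB_small: "x \<prec> m \<Longrightarrow> modB B x m = x"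
  using modB_eq[of x m x \<zero>] by (simp add: mul0l add0l)

abbreviation beta_mod :: "'b \<Rightarrow> 'b \<Rightarrow> 'b" where "beta_mod c i \<equiv> \<one> \<oplus> (i \<oplus> \<one>) \<otimes> c"

lemma beta_mod_nonzero: "beta_mod c i \<noteq> \<zero>"
proof
  assume "beta_mod c i = \<zero>"
  hence "\<one> \<preceq> \<zero>" using le_add_self by metis
  thus False using zero_lt_one by (simp add: R.not_le[symmetric])
qed

lemma beta_beta_mod: "beta B a c i = modB B a (beta_mod c i)" by (simp add: beta_def)

lemma beta_le: "beta B a c i \<preceq> a" using modB_le beta_mod_nonzero beta_beta_mod by metis

lemma quotient_le: "a = q \<otimes> m \<oplus> v \<Longrightarrow> m \<noteq> \<zero> \<Longrightarrow> q \<preceq> a"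
proof -
  assume a: "a = q \<otimes> m \<oplus> v" and m: "m \<noteq> \<zero>"
  have "\<one> \<preceq> m" using m pos_ge1 pos_iff by blast
  hence "q \<otimes> \<one> \<preceq> q \<otimes> m" using mul_le_mono mul_comm by metis
  thus ?thesis using a le_add_self R.order_trans by (metis mul1)
qed

lemma beta_char: "beta B a c i = v \<longleftrightarrow> v \<prec> beta_mod c i \<and> (\<exists>q. q \<preceq> a \<and> a = q \<otimes> beta_mod c i \<oplus> v)"
proof
  assume "beta B a c i = v"
  thus "v \<prec> beta_mod c i \<and> (\<exists>q. q \<preceq> a \<and> a = q \<otimes> beta_mod c i \<oplus> v)"
    using modB_prop[OF beta_mod_nonzero] beta_beta_mod quotient_le[OF _ beta_mod_nonzero] by metis
next
  assume "v \<prec> beta_mod c i \<and> (\<exists>q. q \<preceq> a \<and> a = q \<otimes> beta_mod c i \<oplus> v)"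
  thus "beta B a c i = v" using modB_eq beta_beta_mod by metis
qed

lemma sat_fBeta[simp]: "k \<notin> trm_vars a \<Longrightarrow> k \<notin> trm_vars c \<Longrightarrow> k \<notin> trm_vars i \<Longrightarrow> k \<notin> trm_vars v \<Longrightarrow>
  sat B e (fBeta a c i v k) = (beta B (evt B e a) (evt B e c) (evt B e i) = evt B e v)"
  unfolding beta_char by (simp add: fBeta_def)

end

section \<open>Extending \<beta>-codes\<close>

definition fLetBeta :: "nat \<Rightarrow> trm \<Rightarrow> trm \<Rightarrow> trm \<Rightarrow> nat \<Rightarrow> fm \<Rightarrow> fm" where
  "fLetBeta w a c i k \<psi> = BEx w a (Conj (fBeta a c i (Var w) k) \<psi>)"
definition fAllLt :: "nat \<Rightarrow> trm \<Rightarrow> fm \<Rightarrow> fm" where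
  "fAllLt i t \<psi> = BAll i t (Disj (Neg (fLt (Var i) t)) \<psi>)"
definition fExLt :: "nat \<Rightarrow> trm \<Rightarrow> fm \<Rightarrow> fm" where
  "fExLt i t \<psi> = BEx i t (Conj (fLt (Var i) t) \<psi>)"
definition fDvdBetaMod :: "trm \<Rightarrow> trm \<Rightarrow> trm \<Rightarrow> nat \<Rightarrow> fm" where
  "fDvdBetaMod L c i k = BEx k L (Eq L (Times (Var k) (beta_mod_trm c i)))"
definition fUnitBetaMod :: "trm \<Rightarrow> trm \<Rightarrow> trm \<Rightarrow> nat \<Rightarrow> nat \<Rightarrow> fm" where
  "fUnitBetaMod L c j k1 k2 = BEx k1 (beta_mod_trm c j) (BEx k2 (Times (Var k1) L)
     (Conj (fLt (Var k1) (beta_mod_trm c j)) (Eq (Times (Var k1) L) (Plus One (Times (Var k2) (beta_mod_trm c j))))))"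

lemma delta0_derived_formulas[simp]:
  "delta0 \<psi> \<Longrightarrow> delta0 (fLetBeta w a c i k \<psi>)"
  "delta0 \<psi> \<Longrightarrow> delta0 (fAllLt ii t \<psi>)"
  "delta0 \<psi> \<Longrightarrow> delta0 (fExLt ii t \<psi>)"
  "delta0 (fDvdBetaMod L c i k)"
  "delta0 (fUnitBetaMod L c j k1 k2)"
  by (simp_all add: fLetBeta_def fAllLt_def fExLt_def fDvdBetaMod_def fUnitBetaMod_def)

context isigma1_model begin

definition dvdB :: "'b \<Rightarrow> 'b \<Rightarrow> bool" where "dvdB d x \<longleftrightarrow> (\<exists>q. x = q \<otimes> d)"
definition unit_mod :: "'b \<Rightarrow> 'b \<Rightarrow> bool" where "unit_mod L m \<longleftrightarrow> (\<exists>u k. u \<otimes> L = \<one> \<oplus> k \<otimes> m)"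
text \<open>The \<open>\<Delta>0\<close> form of \<open>unit_mod\<close>, needed to carry \<open>crt_stage\<close> through \<open>\<Sigma>1\<close>-induction.\<close>

definition unit_mod_bounded :: "'b \<Rightarrow> 'b \<Rightarrow> bool" where
  "unit_mod_bounded L m \<longleftrightarrow> (\<exists>u k. u \<prec> m \<and> k \<preceq> u \<otimes> L \<and> u \<otimes> L = \<one> \<oplus> k \<otimes> m)"

lemma one_le_iff: "\<one> \<preceq> x \<longleftrightarrow> x \<noteq> \<zero>"
  using pos_ge1 pos_iff zero_lt_one R.less_le_trans by blast

lemma le_mul_self: "\<one> \<preceq> m \<Longrightarrow> q \<preceq> q \<otimes> m"
  using mul_le_mono[of \<one> m q] by (simp add: mul1l mul_comm)

lemma le_mul_self2: "\<one> \<preceq> m \<Longrightarrow> q \<preceq> m \<otimes> q" using le_mul_self[of m q] by (simp only: mul_comm[of q m])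

lemma le_mult_beta_mod: "q \<preceq> q \<otimes> beta_mod c i" using le_mul_self one_le_iff beta_mod_nonzero by blast

lemma sat_fLetBeta[simp]:
  "w \<notin> trm_vars a \<Longrightarrow> w \<notin> trm_vars c \<Longrightarrow> w \<notin> trm_vars i \<Longrightarrow> k \<noteq> w \<Longrightarrow> k \<notin> trm_vars a \<Longrightarrow> k \<notin> trm_vars c \<Longrightarrow> k \<notin> trm_vars i \<Longrightarrow>
   sat B e (fLetBeta w a c i k \<psi>) = sat B (e(w := beta B (evt B e a) (evt B e c) (evt B e i))) \<psi>"
  unfolding fLetBeta_def using beta_le by auto

lemma sat_fAllLt[simp]: "i \<notin> trm_vars t \<Longrightarrow> sat B e (fAllLt i t \<psi>) = (\<forall>x. x \<prec> evt B e t \<longrightarrow> sat B (e(i := x)) \<psi>)"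
  unfolding fAllLt_def using R.less_imp_le by auto

lemma sat_fExLt[simp]: "i \<notin> trm_vars t \<Longrightarrow> sat B e (fExLt i t \<psi>) = (\<exists>x. x \<prec> evt B e t \<and> sat B (e(i := x)) \<psi>)"
  unfolding fExLt_def using R.less_imp_le by auto

lemma sat_fDvdBetaMod[simp]: "k \<notin> trm_vars L \<Longrightarrow> k \<notin> trm_vars c \<Longrightarrow> k \<notin> trm_vars i \<Longrightarrow>
   sat B e (fDvdBetaMod L c i k) = dvdB (beta_mod (evt B e c) (evt B e i)) (evt B e L)"
  unfolding fDvdBetaMod_def dvdB_def apply auto using le_mult_beta_mod by blast

lemma sat_fUnitBetaMod[simp]: "k1 \<noteq> k2 \<Longrightarrow> k1 \<notin> trm_vars L \<Longrightarrow> k1 \<notin> trm_vars c \<Longrightarrow> k1 \<notin> trm_vars j \<Longrightarrow>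
   k2 \<notin> trm_vars L \<Longrightarrow> k2 \<notin> trm_vars c \<Longrightarrow> k2 \<notin> trm_vars j \<Longrightarrow>
   sat B e (fUnitBetaMod L c j k1 k2) = unit_mod_bounded (evt B e L) (beta_mod (evt B e c) (evt B e j))"
  unfolding fUnitBetaMod_def unit_mod_bounded_def using R.less_imp_le by auto

lemma common_multiple_exists: "\<exists>d. \<one> \<preceq> d \<and> (\<forall>D. \<one> \<preceq> D \<longrightarrow> D \<preceq> N \<longrightarrow> dvdB D d)"
proof -
  let ?\<phi> = "Ex 2 (Conj (Leq One (Var 2)) (BAll 3 (Var 0) (Disj (Neg (Leq One (Var 3))) (BEx 4 (Var 2) (Eq (Var 2) (Times (Var 4) (Var 3)))))))"
  have "\<exists>d. \<one> \<preceq> d \<and> (\<forall>D. D \<preceq> N \<longrightarrow> \<one> \<preceq> D \<longrightarrow> (\<exists>q. q \<preceq> d \<and> d = q \<otimes> D))"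
  proof (rule sigma1_induct[where \<phi> = ?\<phi> and e = "\<lambda>_. \<zero>" and x = 0 and
      P = "\<lambda>N. \<exists>d. \<one> \<preceq> d \<and> (\<forall>D. D \<preceq> N \<longrightarrow> \<one> \<preceq> D \<longrightarrow> (\<exists>q. q \<preceq> d \<and> d = q \<otimes> D))"])
    show "sigma1 ?\<phi>" by (intro sigma1_Ex sigma1_delta0) simp
    show "\<exists>d. \<one> \<preceq> d \<and> (\<forall>D. D \<preceq> \<zero> \<longrightarrow> \<one> \<preceq> D \<longrightarrow> (\<exists>q. q \<preceq> d \<and> d = q \<otimes> D))"
      using one_le_iff le_antisym zero_le R.order_refl by blast
  next
    fix v assume "\<exists>d. \<one> \<preceq> d \<and> (\<forall>D. D \<preceq> v \<longrightarrow> \<one> \<preceq> D \<longrightarrow> (\<exists>q. q \<preceq> d \<and> d = q \<otimes> D))"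
    then obtain d where d: "\<one> \<preceq> d" "\<And>D. D \<preceq> v \<Longrightarrow> \<one> \<preceq> D \<Longrightarrow> \<exists>q. q \<preceq> d \<and> d = q \<otimes> D" by blast
    have v1: "\<one> \<preceq> v \<oplus> \<one>" using le_add_self2 by blast
    let ?d = "d \<otimes> (v \<oplus> \<one>)"
    have "\<one> \<preceq> ?d" using d(1) v1 one_le_iff no_zero_div by blast
    moreover have "\<exists>q. q \<preceq> ?d \<and> ?d = q \<otimes> D" if hD: "D \<preceq> v \<oplus> \<one>" "\<one> \<preceq> D" for D
    proof -
      have "\<exists>q. ?d = q \<otimes> D"
      proof (cases "D \<preceq> v")
        case True then obtain q where "d = q \<otimes> D" using d(2) hD(2) by blast
        thus ?thesis by (intro exI[of _ "q \<otimes> (v \<oplus> \<one>)"]) (simp add: semiring_simps)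
      next
        case False hence "D = v \<oplus> \<one>" using le_succ_cases hD(1) by blast
        thus ?thesis by blast
      qed
      then obtain q where "?d = q \<otimes> D" by blast
      moreover have "q \<preceq> q \<otimes> D" using le_mul_self hD(2) by blast
      ultimately show ?thesis by auto
    qed
    ultimately show "\<exists>d. \<one> \<preceq> d \<and> (\<forall>D. D \<preceq> v \<oplus> \<one> \<longrightarrow> \<one> \<preceq> D \<longrightarrow> (\<exists>q. q \<preceq> d \<and> d = q \<otimes> D))" by blast
  qed simp
  thus ?thesis unfolding dvdB_def by blast
qed

lemma not_lt_zero[simp]: "\<not> x \<prec> \<zero>" using zero_le R.not_less by blast

lemma one_le_mul_succ: "\<one> \<preceq> c \<Longrightarrow> \<one> \<preceq> (j \<oplus> \<one>) \<otimes> c"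
  using one_le_iff no_zero_div succ_nz by blast

lemma le_imp_lt_succ: "x \<preceq> y \<Longrightarrow> x \<prec> y \<oplus> \<one>" using lt_succ_iff by blast

lemma mono_mul2: "a \<preceq> b \<Longrightarrow> c \<preceq> d \<Longrightarrow> a \<otimes> c \<preceq> b \<otimes> d"
  using mul_le_mono[of a b c] mul_le_mono[of c d b] mul_comm R.order_trans by metis

text \<open>The moduli \<open>beta_mod c i\<close> and \<open>beta_mod c j\<close> differ by \<open>(j - i) c\<close> where \<open>j - i\<close> divides \<open>c\<close>,
  so a common divisor divides \<open>c * c\<close> although both moduli are \<open>1\<close> modulo \<open>c\<close>; the Bezout
  witnesses below make this explicit.\<close>

lemma beta_mod_unit:
  assumes c1: "\<one> \<preceq> c" and dv: "\<forall>D. \<one> \<preceq> D \<longrightarrow> D \<preceq> n \<longrightarrow> dvdB D c"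
    and ij: "i \<prec> j" and jn: "j \<preceq> n"
  shows "unit_mod (beta_mod c i) (beta_mod c j)"
proof -
  obtain D where j: "j = i \<oplus> D" using ij le_add_ex R.less_imp_le by blast
  have "D \<noteq> \<zero>" using j ij by (auto simp: add0)
  hence D1: "\<one> \<preceq> D" using one_le_iff by blast
  have "D \<preceq> j" using j le_add_self2 by blast
  hence "D \<preceq> n" using jn R.order_trans by blast
  then obtain t where t: "c = t \<otimes> D" using dv D1 unfolding dvdB_def by blast
  define u where "u = (j \<oplus> \<one>) \<otimes> (j \<oplus> \<one>) \<otimes> (j \<oplus> \<one>) \<otimes> t \<otimes> c"
  define k1 where "k1 = (j \<oplus> \<one>) \<otimes> c \<oplus> (j \<oplus> \<one>) \<otimes> (j \<oplus> \<one>) \<otimes> t \<otimes> (i \<oplus> \<one>) \<otimes> c"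
  have iden: "u \<otimes> beta_mod c i \<oplus> beta_mod c j = \<one> \<oplus> beta_mod c j \<otimes> k1"
    unfolding u_def k1_def j t by (simp add: semiring_simps)
  have "\<one> \<preceq> (j \<oplus> \<one>) \<otimes> c" using c1 by (rule one_le_mul_succ)
  hence "\<one> \<preceq> k1" unfolding k1_def using le_add_self R.order_trans by blast
  then obtain k0 where k0: "k1 = \<one> \<oplus> k0" using le_add_ex by blast
  have "u \<otimes> beta_mod c i \<oplus> beta_mod c j = (\<one> \<oplus> k0 \<otimes> beta_mod c j) \<oplus> beta_mod c j"
    using iden unfolding k0 by (simp add: semiring_simps)
  hence "u \<otimes> beta_mod c i = \<one> \<oplus> k0 \<otimes> beta_mod c j" by (rule add_cancel_right)
  thus ?thesis unfolding unit_mod_def by blast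
qed

lemma unit_mod_mult: "unit_mod L m \<Longrightarrow> unit_mod L' m \<Longrightarrow> unit_mod (L \<otimes> L') m"
proof -
  assume "unit_mod L m" "unit_mod L' m"
  then obtain u1 k1 u2 k2 where a: "u1 \<otimes> L = \<one> \<oplus> k1 \<otimes> m" "u2 \<otimes> L' = \<one> \<oplus> k2 \<otimes> m"
    unfolding unit_mod_def by blast
  have "(u1 \<otimes> u2) \<otimes> (L \<otimes> L') = (u1 \<otimes> L) \<otimes> (u2 \<otimes> L')" by (simp add: semiring_simps)
  also have "\<dots> = \<one> \<oplus> (k1 \<oplus> k2 \<oplus> k1 \<otimes> k2 \<otimes> m) \<otimes> m" unfolding a by (simp add: semiring_simps)
  finally show ?thesis unfolding unit_mod_def by blast
qed

lemma unit_mod_bounded_imp_unit_mod: "unit_mod_bounded L m \<Longrightarrow> unit_mod L m" unfolding unit_mod_bounded_def unit_mod_def by blast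

lemma unit_mod_imp_bounded:
  assumes m: "\<one> \<prec> m" and iv: "unit_mod L m"
  shows "unit_mod_bounded L m"
proof -
  obtain u k where uk: "u \<otimes> L = \<one> \<oplus> k \<otimes> m" using iv unfolding unit_mod_def by blast
  have mz: "m \<noteq> \<zero>" using m zero_le R.not_le by (metis R.less_le_trans zero_lt_one R.less_irrefl)
  obtain q u' where qu: "u' \<prec> m" "u = q \<otimes> m \<oplus> u'" using div_exists[OF mz] by blast
  have uL: "u \<otimes> L = q \<otimes> L \<otimes> m \<oplus> u' \<otimes> L" unfolding qu(2) by (simp add: semiring_simps)
  have "q \<otimes> L \<preceq> k"
  proof (rule ccontr)
    assume "\<not> q \<otimes> L \<preceq> k"
    hence "k \<prec> q \<otimes> L" using R.not_le by blast
    hence "k \<oplus> \<one> \<preceq> q \<otimes> L" by (rule lt_imp_succ_le)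
    hence "(k \<oplus> \<one>) \<otimes> m \<preceq> q \<otimes> L \<otimes> m" by (rule mul_le_mono)
    also have "\<dots> \<preceq> u \<otimes> L" unfolding uL by (rule le_add_self)
    finally have "k \<otimes> m \<oplus> m \<preceq> k \<otimes> m \<oplus> \<one>" unfolding uk by (simp add: semiring_simps)
    hence "m \<preceq> \<one>" using R.add_le_cancel_left by blast
    thus False using m by (simp add: R.not_le[symmetric])
  qed
  then obtain k' where k': "k = q \<otimes> L \<oplus> k'" using le_add_ex by blast
  have "q \<otimes> L \<otimes> m \<oplus> u' \<otimes> L = q \<otimes> L \<otimes> m \<oplus> (\<one> \<oplus> k' \<otimes> m)"
    using uk uL k' by (simp add: semiring_simps)
  hence e: "u' \<otimes> L = \<one> \<oplus> k' \<otimes> m" by (rule add_cancel_left)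
  have "k' \<preceq> k' \<otimes> m" using le_mul_self m R.less_imp_le by blast
  also have "\<dots> \<preceq> u' \<otimes> L" unfolding e using le_add_self2 by blast
  finally show ?thesis unfolding unit_mod_bounded_def using qu(1) e by blast
qed

lemma one_lt_beta_mod: "\<one> \<preceq> c \<Longrightarrow> \<one> \<prec> beta_mod c j"
proof -
  assume "\<one> \<preceq> c"
  hence "\<one> \<preceq> (j \<oplus> \<one>) \<otimes> c" by (rule one_le_mul_succ)
  hence "\<zero> \<prec> (j \<oplus> \<one>) \<otimes> c" using pos_iff one_le_iff by blast
  hence "\<one> \<oplus> \<zero> \<prec> \<one> \<oplus> (j \<oplus> \<one>) \<otimes> c" by (rule R.add_strict_left_mono)
  thus ?thesis by (simp add: add0)
qed

lemma beta_code_crt_step: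
  assumes dvd: "\<And>i. i \<prec> k \<Longrightarrow> dvdB (beta_mod c i) L" and unit: "unit_mod L (beta_mod c k)"
    and w: "w \<prec> beta_mod c k"
  shows "\<exists>a'. (\<forall>i. i \<prec> k \<longrightarrow> beta B a' c i = beta B a c i) \<and> beta B a' c k = w"
proof -
  obtain u k0 where uk: "u \<otimes> L = \<one> \<oplus> k0 \<otimes> beta_mod c k" using unit unfolding unit_mod_def by blast
  define m where "m = (k \<oplus> \<one>) \<otimes> c"
  define a' where "a' = a \<oplus> L \<otimes> u \<otimes> (w \<oplus> m \<otimes> a)"
  have "a' = a \<oplus> (u \<otimes> L) \<otimes> (w \<oplus> m \<otimes> a)" unfolding a'_def by (simp add: semiring_simps)
  also have "\<dots> = (a \<oplus> k0 \<otimes> (w \<oplus> m \<otimes> a)) \<otimes> beta_mod c k \<oplus> w"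
    unfolding uk m_def by (simp add: semiring_simps)
  finally have "beta B a' c k = w" using beta_beta_mod modB_eq w by metis
  moreover have "beta B a' c i = beta B a c i" if ik: "i \<prec> k" for i
  proof -
    obtain t where t: "L = t \<otimes> beta_mod c i" using dvd[OF ik] unfolding dvdB_def by blast
    have "a' = a \<oplus> (t \<otimes> u \<otimes> (w \<oplus> m \<otimes> a)) \<otimes> beta_mod c i"
      unfolding a'_def t by (simp add: semiring_simps)
    thus ?thesis using beta_beta_mod modB_add_mult beta_mod_nonzero by metis
  qed
  ultimately show ?thesis by blast
qed

lemma le_beta_mod: "c \<preceq> beta_mod c i"
proof -
  have "c \<preceq> (i \<oplus> \<one>) \<otimes> c" using le_mul_self2[of "i \<oplus> \<one>" c] one_le_iff succ_nz by blast
  also have "\<dots> \<preceq> beta_mod c i" using le_add_self2 by blast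
  finally show ?thesis .
qed

lemma beta_modulus_exists: "\<exists>c. \<one> \<preceq> c \<and> b \<prec> c \<and> (\<forall>D. \<one> \<preceq> D \<longrightarrow> D \<preceq> n \<longrightarrow> dvdB D c)"
proof -
  obtain d where d: "\<one> \<preceq> d" "\<forall>D. \<one> \<preceq> D \<longrightarrow> D \<preceq> n \<longrightarrow> dvdB D d"
    using common_multiple_exists by blast
  define c where "c = d \<otimes> (b \<oplus> \<one>)"
  have "\<one> \<preceq> c" unfolding c_def using d(1) one_le_iff no_zero_div succ_nz by blast
  moreover have "b \<prec> c"
    using le_imp_lt_succ[OF R.order_refl] le_mul_self2[OF d(1)] R.less_le_trans unfolding c_def by blast
  moreover have "dvdB D c" if D: "\<one> \<preceq> D" "D \<preceq> n" for D
  proof -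
    obtain q where "d = q \<otimes> D" using d(2) D unfolding dvdB_def by blast
    hence "c = (q \<otimes> (b \<oplus> \<one>)) \<otimes> D" unfolding c_def by (simp add: semiring_simps)
    thus ?thesis unfolding dvdB_def by blast
  qed
  ultimately show ?thesis by blast
qed

text \<open>Invariant of the Chinese remainder construction in \<open>beta_code_extend\<close>. Since \<open>L\<close> is a unit
  modulo every modulus still to come, the next residue can be set by adding a multiple of \<open>L\<close>,
  which leaves the earlier residues unchanged.\<close>

definition crt_stage :: "'b \<Rightarrow> 'b \<Rightarrow> 'b \<Rightarrow> 'b \<Rightarrow> 'b \<Rightarrow> 'b \<Rightarrow> 'b \<Rightarrow> 'b \<Rightarrow> bool" where
  "crt_stage a c n v c' k a' L \<longleftrightarrow>
     (\<forall>i. i \<prec> k \<longrightarrow> ((i \<prec> n \<and> beta B a' c' i = beta B a c i) \<or> (i = n \<and> beta B a' c' i = v)) \<and>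
        dvdB (beta_mod c' i) L) \<and>
     (\<forall>j. j \<preceq> n \<longrightarrow> k \<preceq> j \<longrightarrow> unit_mod_bounded L (beta_mod c' j))"

lemma crt_stage_zero: "\<one> \<preceq> c' \<Longrightarrow> crt_stage a c n v c' \<zero> a' \<one>"
proof -
  assume c1: "\<one> \<preceq> c'"
  have "\<one> \<otimes> \<one> = \<one> \<oplus> \<zero> \<otimes> beta_mod c' j" for j by (simp add: mul1 mul0l add0)
  hence "unit_mod_bounded \<one> (beta_mod c' j)" for j
    using one_lt_beta_mod[OF c1] zero_le unfolding unit_mod_bounded_def by blast
  thus ?thesis unfolding crt_stage_def by simp
qed

lemma crt_stage_succ:
  assumes c1: "\<one> \<preceq> c'" and dv: "\<forall>D. \<one> \<preceq> D \<longrightarrow> D \<preceq> n \<longrightarrow> dvdB D c'" and big: "a \<oplus> v \<prec> c'"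
    and kn: "k \<preceq> n" and stage: "crt_stage a c n v c' k a' L"
  shows "\<exists>a''. crt_stage a c n v c' (k \<oplus> \<one>) a'' (L \<otimes> beta_mod c' k)"
proof -
  have agree: "\<And>i. i \<prec> k \<Longrightarrow> (i \<prec> n \<and> beta B a' c' i = beta B a c i) \<or> (i = n \<and> beta B a' c' i = v)"
    and dvd: "\<And>i. i \<prec> k \<Longrightarrow> dvdB (beta_mod c' i) L"
    and unit: "\<And>j. j \<preceq> n \<Longrightarrow> k \<preceq> j \<Longrightarrow> unit_mod_bounded L (beta_mod c' j)"
    using stage unfolding crt_stage_def by blast+
  define val where "val = (if k \<prec> n then beta B a c k else v)"
  have "val \<preceq> a \<oplus> v" unfolding val_def using R.order_trans[OF beta_le le_add_self] le_add_self2 by auto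
  hence "val \<prec> beta_mod c' k" using big le_beta_mod R.le_less_trans R.less_le_trans by blast
  then obtain a'' where a'': "\<And>i. i \<prec> k \<Longrightarrow> beta B a'' c' i = beta B a' c' i" "beta B a'' c' k = val"
    using beta_code_crt_step[OF dvd unit_mod_bounded_imp_unit_mod[OF unit[OF kn R.order_refl]]] by blast
  have "crt_stage a c n v c' (k \<oplus> \<one>) a'' (L \<otimes> beta_mod c' k)" unfolding crt_stage_def
  proof (intro conjI allI impI)
    fix i assume "i \<prec> k \<oplus> \<one>"
    hence "i \<prec> k \<or> i = k" using lt_succ_iff R.le_less by blast
    thus "(i \<prec> n \<and> beta B a'' c' i = beta B a c i) \<or> (i = n \<and> beta B a'' c' i = v)"
    proof
      assume ik: "i \<prec> k"
      hence "i \<prec> n" using kn R.less_le_trans by blast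
      thus ?thesis using agree[OF ik] a''(1)[OF ik] by auto
    next
      assume "i = k"
      thus ?thesis using a''(2) kn R.le_less unfolding val_def by (cases "k \<prec> n") auto
    qed
    show "dvdB (beta_mod c' i) (L \<otimes> beta_mod c' k)"
      using \<open>i \<prec> k \<or> i = k\<close> dvd unfolding dvdB_def by (metis mul_assoc mul_comm)
  next
    fix j assume j: "j \<preceq> n" "k \<oplus> \<one> \<preceq> j"
    hence kj: "k \<prec> j" using R.less_le_trans le_imp_lt_succ R.order_refl by blast
    have "unit_mod L (beta_mod c' j)"
      using unit[OF j(1)] kj R.less_imp_le unit_mod_bounded_imp_unit_mod by blast
    hence "unit_mod (L \<otimes> beta_mod c' k) (beta_mod c' j)"
      using unit_mod_mult beta_mod_unit[OF c1 dv kj j(1)] by blast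
    thus "unit_mod_bounded (L \<otimes> beta_mod c' k) (beta_mod c' j)"
      using unit_mod_imp_bounded one_lt_beta_mod c1 by blast
  qed
  thus ?thesis by blast
qed

lemma beta_code_extend: "\<exists>a' c'. (\<forall>i. i \<prec> n \<longrightarrow> beta B a' c' i = beta B a c i) \<and> beta B a' c' n = v"
proof -
  obtain c' where c1: "\<one> \<preceq> c'" and big: "a \<oplus> v \<prec> c'"
    and dv: "\<forall>D. \<one> \<preceq> D \<longrightarrow> D \<preceq> n \<longrightarrow> dvdB D c'"
    using beta_modulus_exists by blast
  let ?VAL = "Disj (Conj (fLt (Var 8) (Var 1)) (fLetBeta 10 (Var 2) (Var 3) (Var 8) 11 (fBeta (Var 6) (Var 5) (Var 8) (Var 10) 11)))
                   (Conj (Eq (Var 8) (Var 1)) (fBeta (Var 6) (Var 5) (Var 8) (Var 4) 11))"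
  let ?\<phi> = "Ex 6 (Ex 7 (Disj (Neg (Leq (Var 0) (Plus (Var 1) One)))
     (Conj (fAllLt 8 (Var 0) (Conj ?VAL (fDvdBetaMod (Var 7) (Var 5) (Var 8) 12)))
           (BAll 9 (Var 1) (Disj (Neg (Leq (Var 0) (Var 9))) (fUnitBetaMod (Var 7) (Var 5) (Var 9) 13 14))))))"
  have "\<exists>a' L. k \<preceq> n \<oplus> \<one> \<longrightarrow> crt_stage a c n v c' k a' L" for k
  proof (rule sigma1_induct[where \<phi> = ?\<phi> and e = "(\<lambda>_. \<zero>)(1 := n, 2 := a, 3 := c, 4 := v, 5 := c')" and x = 0])
    show "sigma1 ?\<phi>" by (intro sigma1_Ex sigma1_delta0) simp
    show "sat B (((\<lambda>_. \<zero>)(1 := n, 2 := a, 3 := c, 4 := v, 5 := c'))(0 := k)) ?\<phi>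
        = (\<exists>a' L. k \<preceq> n \<oplus> \<one> \<longrightarrow> crt_stage a c n v c' k a' L)" for k
      unfolding crt_stage_def by simp
    show "\<exists>a' L. \<zero> \<preceq> n \<oplus> \<one> \<longrightarrow> crt_stage a c n v c' \<zero> a' L" using crt_stage_zero[OF c1] by blast
    show "\<exists>a' L. k \<oplus> \<one> \<preceq> n \<oplus> \<one> \<longrightarrow> crt_stage a c n v c' (k \<oplus> \<one>) a' L"
      if "\<exists>a' L. k \<preceq> n \<oplus> \<one> \<longrightarrow> crt_stage a c n v c' k a' L" for k
    proof (cases "k \<preceq> n")
      case True
      thus ?thesis using that le_add_self R.order_trans crt_stage_succ[OF c1 dv big True] by blast
    next
      case False
      thus ?thesis using R.add_le_cancel_right by blast
    qed
  qed
  then obtain a' L where "crt_stage a c n v c' (n \<oplus> \<one>) a' L" using R.order_refl by blast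
  hence H: "\<And>i. i \<prec> n \<oplus> \<one> \<Longrightarrow> (i \<prec> n \<and> beta B a' c' i = beta B a c i) \<or> (i = n \<and> beta B a' c' i = v)"
    unfolding crt_stage_def by blast
  have "\<forall>i. i \<prec> n \<longrightarrow> beta B a' c' i = beta B a c i" using H le_imp_lt_succ R.less_imp_le by blast
  moreover have "beta B a' c' n = v" using H[of n] le_imp_lt_succ R.order_refl by auto
  ultimately show ?thesis by blast
qed

end

section \<open>Coding bounded \<Delta>0 sets; internal sums\<close>

text \<open>Definability with parameters: variables below 20 are the formula's own (variable 0 is the
  argument, variable 1 the value of a defined function), the others hold fixed parameters.\<close>

definition local_env :: "(nat \<Rightarrow> 'b) \<Rightarrow> (nat \<Rightarrow> 'b) \<Rightarrow> nat \<Rightarrow> 'b" where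
  "local_env e f = (\<lambda>j. if j < 20 then f j else e j)"

lemma local_env_upd[simp]: "j < 20 \<Longrightarrow> (local_env e f)(j := v) = local_env e (f(j := v))"
  by (auto simp: local_env_def)
lemma local_env_apply[simp]: "local_env e f j = (if j < 20 then f j else e j)"
  by (simp add: local_env_def)

context isigma1_model begin

definition delta0_set :: "('b \<Rightarrow> bool) \<Rightarrow> bool" where
  "delta0_set S \<longleftrightarrow> (\<exists>\<phi> e. delta0 \<phi> \<and> (\<forall>f. sat B (local_env e f) \<phi> = S (f 0)))"
definition delta0_fun :: "('b \<Rightarrow> 'b) \<Rightarrow> bool" where
  "delta0_fun g \<longleftrightarrow> (\<exists>\<phi> e. delta0 \<phi> \<and> (\<forall>f. sat B (local_env e f) \<phi> = (f 1 = g (f 0))))"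

definition codes_below :: "('b \<Rightarrow> bool) \<Rightarrow> 'b \<Rightarrow> 'b \<Rightarrow> 'b \<Rightarrow> 'b \<Rightarrow> bool" where
  "codes_below S k a c n \<longleftrightarrow> (\<forall>i. i \<prec> n \<longrightarrow> beta B a c i \<prec> k \<and> S (beta B a c i)) \<and>
     (\<forall>x. x \<prec> k \<longrightarrow> S x \<longrightarrow> (\<exists>i. i \<prec> n \<and> beta B a c i = x))"

lemma codes_below_snoc:
  assumes below: "codes_below S k a c n" and Sk: "S k"
  shows "\<exists>a' c'. codes_below S (k \<oplus> \<one>) a' c' (n \<oplus> \<one>)"
proof -
  obtain a' c' where a': "\<And>i. i \<prec> n \<Longrightarrow> beta B a' c' i = beta B a c i" "beta B a' c' n = k"
    using beta_code_extend by blast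
  have kk: "k \<prec> k \<oplus> \<one>" using le_imp_lt_succ R.order_refl by blast
  have "codes_below S (k \<oplus> \<one>) a' c' (n \<oplus> \<one>)" unfolding codes_below_def
  proof (rule conjI; intro allI impI)
    fix i assume "i \<prec> n \<oplus> \<one>"
    hence "i \<prec> n \<or> i = n" using lt_succ_iff R.le_less by blast
    thus "beta B a' c' i \<prec> k \<oplus> \<one> \<and> S (beta B a' c' i)"
    proof
      assume "i \<prec> n"
      thus ?thesis using below a'(1)[of i] R.less_trans[OF _ kk] unfolding codes_below_def by auto
    qed (use a'(2) kk Sk in simp)
  next
    fix x assume "x \<prec> k \<oplus> \<one>" "S x"
    hence "x \<prec> k \<or> x = k" using lt_succ_iff R.le_less by blast
    thus "\<exists>i. i \<prec> n \<oplus> \<one> \<and> beta B a' c' i = x"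
    proof
      assume "x \<prec> k"
      then obtain i where "i \<prec> n" "beta B a c i = x" using below \<open>S x\<close> unfolding codes_below_def by blast
      thus ?thesis using a'(1) le_imp_lt_succ R.less_imp_le by metis
    qed (use a'(2) le_imp_lt_succ R.order_refl in blast)
  qed
  thus ?thesis by blast
qed

lemma codes_below_skip:
  assumes below: "codes_below S k a c n" and "\<not> S k"
  shows "codes_below S (k \<oplus> \<one>) a c n"
  unfolding codes_below_def
proof (rule conjI; intro allI impI)
  fix i assume "i \<prec> n"
  moreover have "k \<prec> k \<oplus> \<one>" using le_imp_lt_succ R.order_refl by blast
  ultimately show "beta B a c i \<prec> k \<oplus> \<one> \<and> S (beta B a c i)"
    using below R.less_trans unfolding codes_below_def by blast
next
  fix x assume "x \<prec> k \<oplus> \<one>" "S x"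
  hence "x \<prec> k" using lt_succ_iff R.le_less \<open>\<not> S k\<close> by blast
  thus "\<exists>i. i \<prec> n \<and> beta B a c i = x" using below \<open>S x\<close> unfolding codes_below_def by blast
qed

lemma bounded_delta0_set_coded:
  assumes d: "delta0_set S" and bd: "\<forall>x. S x \<longrightarrow> x \<prec> b"
  shows "coded B {x. S x}"
proof -
  obtain \<phi> e where \<phi>: "delta0 \<phi>" "\<And>f. sat B (local_env e f) \<phi> = S (f 0)"
    using d unfolding delta0_set_def by blast
  let ?\<psi> = "Ex 2 (Ex 3 (Ex 4 (Conj
     (fAllLt 5 (Var 4) (Conj (fLetBeta 8 (Var 2) (Var 3) (Var 5) 7 (fLt (Var 8) (Var 9))) (fLetBeta 0 (Var 2) (Var 3) (Var 5) 7 \<phi>)))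
     (fAllLt 0 (Var 9) (Disj (Neg \<phi>) (fExLt 5 (Var 4) (fBeta (Var 2) (Var 3) (Var 5) (Var 0) 7)))))))"
  have "\<exists>a c n. codes_below S b a c n"
  proof (rule sigma1_induct[where \<phi> = ?\<psi> and e = "local_env e (\<lambda>_. \<zero>)" and x = 9])
    show "sigma1 ?\<psi>" by (intro sigma1_Ex sigma1_delta0) (simp add: \<phi>)
    show "\<And>k. sat B ((local_env e (\<lambda>_. \<zero>))(9 := k)) ?\<psi> = (\<exists>a c n. codes_below S k a c n)"
      unfolding codes_below_def by (simp add: \<phi>)
    show "\<exists>a c n. codes_below S \<zero> a c n" unfolding codes_below_def using not_lt_zero by blast
  qed (use codes_below_snoc codes_below_skip in blast)
  then obtain a c n where "codes_below S b a c n" by blast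
  hence "{x. S x} = {x. \<exists>i. lt B i n \<and> x = beta B a c i}"
    using bd unfolding codes_below_def by blast
  thus ?thesis unfolding coded_def by blast
qed

lemma succ_le_imp_lt: "i \<oplus> \<one> \<preceq> K \<Longrightarrow> i \<prec> K"
  using R.less_le_trans[OF le_imp_lt_succ[OF R.order_refl]] by blast

lemma beta_zero_zero: "beta B \<zero> c \<zero> = \<zero>"
  using modB_small[of \<zero> "beta_mod c \<zero>"] beta_beta_mod beta_mod_nonzero pos_iff by metis

definition partial_sums :: "('b \<Rightarrow> 'b) \<Rightarrow> 'b \<Rightarrow> 'b \<Rightarrow> 'b \<Rightarrow> bool" where
  "partial_sums g K a c \<longleftrightarrow> beta B a c \<zero> = \<zero> \<and>
     (\<forall>i. i \<prec> K \<longrightarrow> beta B a c (i \<oplus> \<one>) = beta B a c i \<oplus> g i)"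

lemma bsum_iff: "bsum B g K s \<longleftrightarrow> (\<exists>a c. partial_sums g K a c \<and> beta B a c K = s)"
  unfolding bsum_def partial_sums_def by blast

lemma bsum_cong: "(\<And>i. i \<prec> K \<Longrightarrow> g i = g' i) \<Longrightarrow> bsum B g K s = bsum B g' K s"
  unfolding bsum_def by (simp add: lt_def)

lemma partial_sums_succ:
  assumes ps: "partial_sums g k a c"
  shows "\<exists>a' c'. partial_sums g (k \<oplus> \<one>) a' c'"
proof -
  obtain a' c' where a': "\<And>i. i \<prec> k \<oplus> \<one> \<Longrightarrow> beta B a' c' i = beta B a c i"
    "beta B a' c' (k \<oplus> \<one>) = beta B a c k \<oplus> g k" using beta_code_extend by blast
  have kk: "k \<prec> k \<oplus> \<one>" using le_imp_lt_succ R.order_refl by blast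
  have "partial_sums g (k \<oplus> \<one>) a' c'" unfolding partial_sums_def
  proof (intro conjI allI impI)
    show "beta B a' c' \<zero> = \<zero>"
      using a'(1) ps zero_le kk R.le_less_trans unfolding partial_sums_def by metis
    fix i assume "i \<prec> k \<oplus> \<one>"
    hence "i \<prec> k \<or> i = k" using lt_succ_iff R.le_less by blast
    thus "beta B a' c' (i \<oplus> \<one>) = beta B a' c' i \<oplus> g i"
    proof
      assume ik: "i \<prec> k"
      hence "i \<oplus> \<one> \<prec> k \<oplus> \<one>" using R.add_strict_right_mono by blast
      thus ?thesis using a'(1) ps ik R.less_trans[OF ik kk] unfolding partial_sums_def by simp
    next
      assume "i = k" thus ?thesis using a' kk by simp
    qed
  qed
  thus ?thesis by blast
qed

lemma bsum_exists:
  assumes "delta0_fun g" shows "\<exists>s. bsum B g K s"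
proof -
  obtain \<phi> e where \<phi>: "delta0 \<phi>" "\<And>f. sat B (local_env e f) \<phi> = (f 1 = g (f 0))"
    using assms unfolding delta0_fun_def by blast
  let ?\<psi> = "Ex 2 (Ex 3 (Conj (fBeta (Var 2) (Var 3) Zero Zero 7)
       (fAllLt 0 (Var 9) (fLetBeta 4 (Var 2) (Var 3) (Var 0) 7 (fLetBeta 5 (Var 2) (Var 3) (Plus (Var 0) One) 7
          (BEx 1 (Var 5) (Conj \<phi> (Eq (Var 5) (Plus (Var 4) (Var 1))))))))))"
  have "\<exists>a c. partial_sums g K a c"
  proof (rule sigma1_induct[where \<phi> = ?\<psi> and e = "local_env e (\<lambda>_. \<zero>)" and x = 9])
    show "sigma1 ?\<psi>" by (intro sigma1_Ex sigma1_delta0) (simp add: \<phi>)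
    have bounded: "(u \<preceq> y \<and> y = z \<oplus> u) = (y = z \<oplus> u)" for u y z
      using le_add_self2 by blast
    show "sat B ((local_env e (\<lambda>_. \<zero>))(9 := k)) ?\<psi> = (\<exists>a c. partial_sums g k a c)" for k
      unfolding partial_sums_def by (simp add: \<phi> bounded)
    show "\<exists>a c. partial_sums g \<zero> a c" unfolding partial_sums_def using beta_zero_zero by auto
  qed (use partial_sums_succ in blast)
  thus ?thesis unfolding bsum_iff by blast
qed

lemma partial_sums_perturb_step:
  assumes ps: "partial_sums g K a c" "partial_sums g' K a' c'" and iK: "i \<prec> K"
    and eq: "i \<noteq> r0 \<Longrightarrow> g i = g' i" and w: "g r0 \<oplus> w = g' r0 \<oplus> w'"
    and inv: "(i \<preceq> r0 \<and> beta B a c i = beta B a' c' i) \<or> (r0 \<prec> i \<and> beta B a c i \<oplus> w = beta B a' c' i \<oplus> w')"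
  shows "(i \<oplus> \<one> \<preceq> r0 \<and> beta B a c (i \<oplus> \<one>) = beta B a' c' (i \<oplus> \<one>)) \<or>
    (r0 \<prec> i \<oplus> \<one> \<and> beta B a c (i \<oplus> \<one>) \<oplus> w = beta B a' c' (i \<oplus> \<one>) \<oplus> w')"
proof -
  have st: "beta B a c (i \<oplus> \<one>) = beta B a c i \<oplus> g i" "beta B a' c' (i \<oplus> \<one>) = beta B a' c' i \<oplus> g' i"
    using ps iK unfolding partial_sums_def by auto
  consider "i \<prec> r0" | "i = r0" | "r0 \<prec> i" by (rule R.linorder_cases)
  thus ?thesis
  proof cases
    case 1
    hence "i \<noteq> r0" "\<not> r0 \<prec> i" using R.not_less R.less_imp_le unfolding lt_def by auto
    hence "beta B a c i = beta B a' c' i" "g i = g' i" using inv eq by blast+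
    moreover have "i \<oplus> \<one> \<preceq> r0" using 1 by (rule lt_imp_succ_le)
    ultimately show ?thesis using st by simp
  next
    case 2
    hence "beta B a c i = beta B a' c' i" using inv by (auto simp: lt_def)
    have "beta B a c (i \<oplus> \<one>) \<oplus> w = beta B a c i \<oplus> (g r0 \<oplus> w)" using st(1) 2 by (simp add: add_assoc)
    also have "\<dots> = beta B a' c' i \<oplus> (g' r0 \<oplus> w')" using w \<open>beta B a c i = beta B a' c' i\<close> by simp
    also have "\<dots> = beta B a' c' (i \<oplus> \<one>) \<oplus> w'" using st(2) 2 by (simp add: add_assoc)
    finally have "beta B a c (i \<oplus> \<one>) \<oplus> w = beta B a' c' (i \<oplus> \<one>) \<oplus> w'" .
    moreover have "r0 \<prec> i \<oplus> \<one>" using 2 le_imp_lt_succ R.order_refl by blast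
    ultimately show ?thesis by blast
  next
    case 3
    hence "i \<noteq> r0" "\<not> i \<preceq> r0" using R.not_le unfolding lt_def by auto
    hence h: "beta B a c i \<oplus> w = beta B a' c' i \<oplus> w'" "g i = g' i" using inv eq by blast+
    have "beta B a c (i \<oplus> \<one>) \<oplus> w = (beta B a c i \<oplus> w) \<oplus> g i" using st(1) by (simp add: semiring_simps)
    also have "\<dots> = (beta B a' c' i \<oplus> w') \<oplus> g' i" using h by simp
    also have "\<dots> = beta B a' c' (i \<oplus> \<one>) \<oplus> w'" using st(2) by (simp add: semiring_simps)
    finally have "beta B a c (i \<oplus> \<one>) \<oplus> w = beta B a' c' (i \<oplus> \<one>) \<oplus> w'" .
    moreover have "r0 \<prec> i \<oplus> \<one>" using 3 le_imp_lt_succ R.less_imp_le by blast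
    ultimately show ?thesis by blast
  qed
qed

text \<open>As there is no subtraction, the change of the summand at \<open>r0\<close> is recorded by the balancing
  terms \<open>w\<close> and \<open>w'\<close>.\<close>

lemma bsum_perturb:
  assumes s: "bsum B g K s" and s': "bsum B g' K s'" and r0: "r0 \<prec> K"
    and eq: "\<And>i. i \<prec> K \<Longrightarrow> i \<noteq> r0 \<Longrightarrow> g i = g' i" and w: "g r0 \<oplus> w = g' r0 \<oplus> w'"
  shows "s \<oplus> w = s' \<oplus> w'"
proof -
  obtain a c a' c' where ps: "partial_sums g K a c" "partial_sums g' K a' c'"
    and sums: "beta B a c K = s" "beta B a' c' K = s'" using s s' unfolding bsum_iff by blast
  let ?\<psi> = "Disj (Neg (Leq (Var 0) (Var 5)))
     (fLetBeta 10 (Var 1) (Var 2) (Var 0) 11 (fLetBeta 12 (Var 3) (Var 4) (Var 0) 11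
       (Disj (Conj (Leq (Var 0) (Var 6)) (Eq (Var 10) (Var 12)))
             (Conj (fLt (Var 6) (Var 0)) (Eq (Plus (Var 10) (Var 7)) (Plus (Var 12) (Var 8)))))))"
  define Q where "Q i = (i \<preceq> K \<longrightarrow> ((i \<preceq> r0 \<and> beta B a c i = beta B a' c' i) \<or>
      (r0 \<prec> i \<and> beta B a c i \<oplus> w = beta B a' c' i \<oplus> w')))" for i
  have "Q K"
  proof (rule sigma1_induct[where \<phi> = ?\<psi> and x = 0
        and e = "(\<lambda>_. \<zero>)(1 := a, 2 := c, 3 := a', 4 := c', 5 := K, 6 := r0, 7 := w, 8 := w')"])
    show "sigma1 ?\<psi>" by (intro sigma1_delta0) simp
    show "\<And>v. sat B (((\<lambda>_. \<zero>)(1 := a, 2 := c, 3 := a', 4 := c', 5 := K, 6 := r0, 7 := w, 8 := w'))(0 := v)) ?\<psi> = Q v"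
      unfolding Q_def by auto
    show "Q \<zero>" unfolding Q_def using ps zero_le unfolding partial_sums_def by simp
    show "Q (i \<oplus> \<one>)" if "Q i" for i unfolding Q_def
    proof
      assume "i \<oplus> \<one> \<preceq> K"
      hence "i \<prec> K" by (rule succ_le_imp_lt)
      with that show "(i \<oplus> \<one> \<preceq> r0 \<and> beta B a c (i \<oplus> \<one>) = beta B a' c' (i \<oplus> \<one>)) \<or>
          (r0 \<prec> i \<oplus> \<one> \<and> beta B a c (i \<oplus> \<one>) \<oplus> w = beta B a' c' (i \<oplus> \<one>) \<oplus> w')"
        using partial_sums_perturb_step[OF ps _ eq w] R.less_imp_le unfolding Q_def by blast
    qed
  qed
  thus ?thesis unfolding Q_def using sums r0 R.order_refl R.not_le by blast
qed

lemma partial_sums_extend_step: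
  assumes ps: "partial_sums g K a c" "partial_sums g K' a' c'" and s: "beta B a c K = s"
    and iK': "i \<prec> K'" and z: "K \<preceq> i \<Longrightarrow> g i = \<zero>"
    and inv: "(i \<preceq> K \<and> beta B a c i = beta B a' c' i) \<or> (K \<preceq> i \<and> beta B a' c' i = s)"
  shows "(i \<oplus> \<one> \<preceq> K \<and> beta B a c (i \<oplus> \<one>) = beta B a' c' (i \<oplus> \<one>)) \<or>
    (K \<preceq> i \<oplus> \<one> \<and> beta B a' c' (i \<oplus> \<one>) = s)"
proof -
  have st': "beta B a' c' (i \<oplus> \<one>) = beta B a' c' i \<oplus> g i"
    using ps(2) iK' unfolding partial_sums_def by auto
  show ?thesis
  proof (cases "i \<oplus> \<one> \<preceq> K")
    case True
    hence iK: "i \<prec> K" by (rule succ_le_imp_lt)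
    hence "\<not> K \<preceq> i" by (simp add: R.not_le)
    hence "beta B a c i = beta B a' c' i" using inv by blast
    moreover have "beta B a c (i \<oplus> \<one>) = beta B a c i \<oplus> g i"
      using ps(1) iK unfolding partial_sums_def by blast
    ultimately show ?thesis using True st' by simp
  next
    case False
    hence "K \<prec> i \<oplus> \<one>" using R.not_le by blast
    hence Ki: "K \<preceq> i" using lt_succ_iff by blast
    from inv have "beta B a' c' i = s"
    proof
      assume h: "i \<preceq> K \<and> beta B a c i = beta B a' c' i"
      hence "i = K" using Ki le_antisym by blast
      thus ?thesis using h s by simp
    qed simp
    hence "beta B a' c' (i \<oplus> \<one>) = s" using st' z[OF Ki] add0 by simp
    moreover have "K \<preceq> i \<oplus> \<one>" using Ki le_add_self R.order_trans by blast
    ultimately show ?thesis by blast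
  qed
qed

lemma bsum_extend:
  assumes s: "bsum B g K s" and s': "bsum B g K' s'" and KK: "K \<preceq> K'"
    and z: "\<And>i. K \<preceq> i \<Longrightarrow> i \<prec> K' \<Longrightarrow> g i = \<zero>"
  shows "s = s'"
proof -
  obtain a c a' c' where ps: "partial_sums g K a c" "partial_sums g K' a' c'"
    and sums: "beta B a c K = s" "beta B a' c' K' = s'" using s s' unfolding bsum_iff by blast
  let ?\<psi> = "Disj (Neg (Leq (Var 0) (Var 6)))
     (fLetBeta 10 (Var 1) (Var 2) (Var 0) 11 (fLetBeta 12 (Var 3) (Var 4) (Var 0) 11
       (Disj (Conj (Leq (Var 0) (Var 5)) (Eq (Var 10) (Var 12)))
             (Conj (Leq (Var 5) (Var 0)) (Eq (Var 12) (Var 7))))))"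
  define Q where "Q i = (i \<preceq> K' \<longrightarrow> ((i \<preceq> K \<and> beta B a c i = beta B a' c' i) \<or>
      (K \<preceq> i \<and> beta B a' c' i = s)))" for i
  have "Q K'"
  proof (rule sigma1_induct[where \<phi> = ?\<psi> and x = 0
        and e = "(\<lambda>_. \<zero>)(1 := a, 2 := c, 3 := a', 4 := c', 5 := K, 6 := K', 7 := s)"])
    show "sigma1 ?\<psi>" by (intro sigma1_delta0) simp
    show "\<And>v. sat B (((\<lambda>_. \<zero>)(1 := a, 2 := c, 3 := a', 4 := c', 5 := K, 6 := K', 7 := s))(0 := v)) ?\<psi> = Q v"
      unfolding Q_def by auto
    show "Q \<zero>" unfolding Q_def using ps zero_le unfolding partial_sums_def by simp
    show "Q (i \<oplus> \<one>)" if "Q i" for i unfolding Q_def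
    proof
      assume "i \<oplus> \<one> \<preceq> K'"
      hence "i \<prec> K'" by (rule succ_le_imp_lt)
      moreover have "(i \<preceq> K \<and> beta B a c i = beta B a' c' i) \<or> (K \<preceq> i \<and> beta B a' c' i = s)"
        using that \<open>i \<prec> K'\<close> R.less_imp_le unfolding Q_def by blast
      ultimately show "(i \<oplus> \<one> \<preceq> K \<and> beta B a c (i \<oplus> \<one>) = beta B a' c' (i \<oplus> \<one>)) \<or>
          (K \<preceq> i \<oplus> \<one> \<and> beta B a' c' (i \<oplus> \<one>) = s)"
        using partial_sums_extend_step[OF ps sums(1)] z by blast
    qed
  qed
  thus ?thesis unfolding Q_def using sums KK R.order_refl le_antisym by blast
qed

end

section \<open>Cantor pairing and primes\<close>

definition CPt :: "trm \<Rightarrow> trm \<Rightarrow> trm" where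
  "CPt x y = Plus (Times (Plus x y) (Plus (Plus x y) One)) (Plus y y)"
definition fTriple :: "trm \<Rightarrow> trm \<Rightarrow> trm \<Rightarrow> trm \<Rightarrow> nat \<Rightarrow> fm" where
  "fTriple p q v t k = BEx k t (Conj (Eq (Plus (Var k) (Var k)) (CPt q v)) (Eq (Plus t t) (CPt p (Var k))))"
definition fPrime :: "trm \<Rightarrow> nat \<Rightarrow> nat \<Rightarrow> fm" where
  "fPrime p k1 k2 = Conj (fLt One p) (BAll k1 p (BAll k2 p
     (Disj (Neg (Eq (Times (Var k1) (Var k2)) p)) (Disj (Eq (Var k1) One) (Eq (Var k1) p)))))"

lemma trm_vars_CPt[simp]: "trm_vars (CPt x y) = trm_vars x \<union> trm_vars y" by (auto simp: CPt_def)
lemma delta0_fTriple[simp]: "delta0 (fTriple p q v t k)" by (simp add: fTriple_def CPt_def)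
lemma delta0_fPrime[simp]: "delta0 (fPrime p k1 k2)" by (simp add: fPrime_def)

context isigma1_model begin

declare R.one_add_one[simp del]

abbreviation CP :: "'b \<Rightarrow> 'b \<Rightarrow> 'b" where
  "CP x y \<equiv> (x \<oplus> y) \<otimes> ((x \<oplus> y) \<oplus> \<one>) \<oplus> (y \<oplus> y)"

lemma evt_CPt[simp]: "evt B e (CPt x y) = CP (evt B e x) (evt B e y)" by (simp add: CPt_def)

lemma pronic_even: "\<exists>h. h \<oplus> h = s \<otimes> (s \<oplus> \<one>)"
proof (rule sigma1_induct[where \<phi> = "Ex 2 (Eq (Plus (Var 2) (Var 2)) (Times (Var 0) (Plus (Var 0) One)))"
      and e = "\<lambda>_. \<zero>" and x = 0 and P = "\<lambda>s. \<exists>h. h \<oplus> h = s \<otimes> (s \<oplus> \<one>)"])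
  show "sigma1 (Ex 2 (Eq (Plus (Var 2) (Var 2)) (Times (Var 0) (Plus (Var 0) One))))"
    by (intro sigma1_Ex sigma1_delta0) simp
  show "\<exists>h. h \<oplus> h = \<zero> \<otimes> (\<zero> \<oplus> \<one>)" by (rule exI[of _ \<zero>]) (simp add: add0 mul0l)
next
  fix v assume "\<exists>h. h \<oplus> h = v \<otimes> (v \<oplus> \<one>)"
  then obtain h where h: "h \<oplus> h = v \<otimes> (v \<oplus> \<one>)" by blast
  have "(h \<oplus> v \<oplus> \<one>) \<oplus> (h \<oplus> v \<oplus> \<one>) = (h \<oplus> h) \<oplus> (v \<oplus> \<one>) \<oplus> (v \<oplus> \<one>)" by (simp add: semiring_simps)
  also have "\<dots> = (v \<oplus> \<one>) \<otimes> (v \<oplus> \<one> \<oplus> \<one>)" unfolding h by (simp add: semiring_simps)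
  finally show "\<exists>h. h \<oplus> h = (v \<oplus> \<one>) \<otimes> (v \<oplus> \<one> \<oplus> \<one>)" by blast
qed simp

lemma double_strict_mono: "x \<prec> y \<Longrightarrow> x \<oplus> x \<prec> y \<oplus> y"
  using R.add_strict_mono by blast

lemma double_le_iff: "x \<oplus> x \<preceq> y \<oplus> y \<longleftrightarrow> x \<preceq> y"
  using double_strict_mono R.add_mono R.not_le by metis

lemma double_inj: "x \<oplus> x = y \<oplus> y \<Longrightarrow> x = y"
  using double_le_iff le_antisym R.order_refl by metis

lemma CP_even: "\<exists>z. z \<oplus> z = CP x y"
proof -
  obtain h where "h \<oplus> h = (x \<oplus> y) \<otimes> ((x \<oplus> y) \<oplus> \<one>)" using pronic_even by blast
  hence "(h \<oplus> h) \<oplus> (y \<oplus> y) = CP x y" by simp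
  moreover have "(h \<oplus> y) \<oplus> (h \<oplus> y) = (h \<oplus> h) \<oplus> (y \<oplus> y)" by (simp add: semiring_simps)
  ultimately have "(h \<oplus> y) \<oplus> (h \<oplus> y) = CP x y" by simp
  thus ?thesis by blast
qed

lemma cpair_prop: "cpair B x y \<oplus> cpair B x y = CP x y"
proof -
  obtain z where z: "z \<oplus> z = CP x y" using CP_even by blast
  have "cpair B x y = z" unfolding cpair_def
  proof (rule the_equality)
    show "z \<oplus> z = CP x y" by (rule z)
    fix w assume "w \<oplus> w = CP x y"
    hence "w \<oplus> w = z \<oplus> z" using z by simp
    thus "w = z" by (rule double_inj)
  qed
  thus ?thesis using z by simp
qed

lemma cpair_eq: "z \<oplus> z = CP x y \<Longrightarrow> cpair B x y = z"
  using cpair_prop[of x y] double_inj[of "cpair B x y" z] by simp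

lemma CP_mono: "x \<preceq> x' \<Longrightarrow> y \<preceq> y' \<Longrightarrow> CP x y \<preceq> CP x' y'"
proof -
  assume h: "x \<preceq> x'" "y \<preceq> y'"
  hence s: "x \<oplus> y \<preceq> x' \<oplus> y'" using R.add_mono by blast
  hence "x \<oplus> y \<oplus> \<one> \<preceq> x' \<oplus> y' \<oplus> \<one>" using R.add_right_mono by blast
  hence "(x \<oplus> y) \<otimes> ((x \<oplus> y) \<oplus> \<one>) \<preceq> (x' \<oplus> y') \<otimes> ((x' \<oplus> y') \<oplus> \<one>)" using s mono_mul2 by blast
  moreover have "y \<oplus> y \<preceq> y' \<oplus> y'" using h R.add_mono by blast
  ultimately show ?thesis using R.add_mono by blast
qed

lemma cpair_mono: "x \<preceq> x' \<Longrightarrow> y \<preceq> y' \<Longrightarrow> cpair B x y \<preceq> cpair B x' y'"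
  using CP_mono cpair_prop double_le_iff by metis

lemma le_CP: "x \<oplus> y \<oplus> (x \<oplus> y) \<preceq> CP x y"
proof -
  define s where "s = x \<oplus> y"
  have "s \<oplus> s \<preceq> s \<otimes> (s \<oplus> \<one>)"
  proof (cases "s = \<zero>")
    case True thus ?thesis by (simp add: add0 mul0l zero_le)
  next
    case False
    hence "s \<preceq> s \<otimes> s" using le_mul_self one_le_iff by blast
    hence "s \<oplus> s \<preceq> s \<otimes> s \<oplus> s" using R.add_right_mono by blast
    thus ?thesis by (simp add: distl mul1)
  qed
  also have "\<dots> \<preceq> CP x y" unfolding s_def by (rule le_add_self)
  finally show ?thesis unfolding s_def .
qed

lemma cpair_ge: "x \<preceq> cpair B x y" "y \<preceq> cpair B x y"
proof -
  have "x \<oplus> y \<preceq> cpair B x y" using le_CP cpair_prop double_le_iff by metis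
  thus "x \<preceq> cpair B x y" "y \<preceq> cpair B x y" using le_add_self le_add_self2 R.order_trans by blast+
qed

lemma CP_strict:
  assumes "x \<oplus> y \<prec> x' \<oplus> y'" shows "CP x y \<prec> CP x' y'"
proof -
  define s where "s = x \<oplus> y"
  define s' where "s' = x' \<oplus> y'"
  have ss: "s \<oplus> \<one> \<preceq> s'" using assms lt_imp_succ_le unfolding s_def s'_def by blast
  have "y \<preceq> s" unfolding s_def by (rule le_add_self2)
  hence "y \<oplus> y \<prec> (s \<oplus> \<one>) \<oplus> (s \<oplus> \<one>)" using double_strict_mono le_imp_lt_succ by blast
  hence "CP x y \<prec> s \<otimes> (s \<oplus> \<one>) \<oplus> ((s \<oplus> \<one>) \<oplus> (s \<oplus> \<one>))" unfolding s_def
    using R.add_strict_left_mono by blast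
  also have "\<dots> = (s \<oplus> \<one>) \<otimes> ((s \<oplus> \<one>) \<oplus> \<one>)" by (simp add: semiring_simps)
  also have "\<dots> \<preceq> s' \<otimes> (s' \<oplus> \<one>)" using ss mono_mul2 R.add_right_mono by blast
  also have "\<dots> \<preceq> CP x' y'" unfolding s'_def by (rule le_add_self)
  finally show ?thesis .
qed

lemma cpair_inj: "cpair B x y = cpair B x' y' \<Longrightarrow> x = x' \<and> y = y'"
proof -
  assume h: "cpair B x y = cpair B x' y'"
  hence CPe: "CP x y = CP x' y'" using cpair_prop by metis
  have "x \<oplus> y = x' \<oplus> y'"
  proof (rule ccontr)
    assume "x \<oplus> y \<noteq> x' \<oplus> y'"
    hence "x \<oplus> y \<prec> x' \<oplus> y' \<or> x' \<oplus> y' \<prec> x \<oplus> y" using R.linorder_cases by blast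
    thus False using CP_strict CPe R.less_irrefl by metis
  qed
  hence "y \<oplus> y = y' \<oplus> y'" using CPe R.add_left_cancel by simp
  hence "y = y'" by (rule double_inj)
  thus ?thesis using \<open>x \<oplus> y = x' \<oplus> y'\<close> R.add_right_cancel by blast
qed

lemma triple_inj: "triple B p q v = triple B p' q' v' \<Longrightarrow> p = p' \<and> q = q' \<and> v = v'"
  unfolding triple_def using cpair_inj by blast

lemma triple_ge: "p \<preceq> triple B p q v" "q \<preceq> triple B p q v" "v \<preceq> triple B p q v"
  unfolding triple_def using cpair_ge R.order_trans by blast+

lemma triple_mono: "p \<preceq> p' \<Longrightarrow> q \<preceq> q' \<Longrightarrow> v \<preceq> v' \<Longrightarrow> triple B p q v \<preceq> triple B p' q' v'"
  unfolding triple_def using cpair_mono by blast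

lemma triple_char: "t = triple B p q v \<longleftrightarrow> (\<exists>u. u \<preceq> t \<and> u \<oplus> u = CP q v \<and> t \<oplus> t = CP p u)"
proof
  assume "t = triple B p q v"
  thus "\<exists>u. u \<preceq> t \<and> u \<oplus> u = CP q v \<and> t \<oplus> t = CP p u"
    unfolding triple_def using cpair_prop cpair_ge by blast
next
  assume "\<exists>u. u \<preceq> t \<and> u \<oplus> u = CP q v \<and> t \<oplus> t = CP p u"
  then obtain u where "u \<oplus> u = CP q v" "t \<oplus> t = CP p u" by blast
  thus "t = triple B p q v" unfolding triple_def using cpair_eq by metis
qed

lemma sat_fTriple[simp]: "k \<notin> trm_vars p \<Longrightarrow> k \<notin> trm_vars q \<Longrightarrow> k \<notin> trm_vars v \<Longrightarrow> k \<notin> trm_vars t \<Longrightarrow>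
   sat B e (fTriple p q v t k) = (evt B e t = triple B (evt B e p) (evt B e q) (evt B e v))"
  unfolding triple_char by (simp add: fTriple_def)

lemma prime_char: "primeB B p \<longleftrightarrow> \<one> \<prec> p \<and> (\<forall>d. d \<preceq> p \<longrightarrow> (\<forall>e. e \<preceq> p \<longrightarrow> d \<otimes> e = p \<longrightarrow> d = \<one> \<or> d = p))"
proof
  assume "\<one> \<prec> p \<and> (\<forall>d. d \<preceq> p \<longrightarrow> (\<forall>e. e \<preceq> p \<longrightarrow> d \<otimes> e = p \<longrightarrow> d = \<one> \<or> d = p))"
  hence h: "\<one> \<prec> p" "\<And>d e. d \<preceq> p \<Longrightarrow> e \<preceq> p \<Longrightarrow> d \<otimes> e = p \<Longrightarrow> d = \<one> \<or> d = p" by auto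
  have pz: "p \<noteq> \<zero>" using h(1) zero_le R.not_le by (metis R.less_le_trans zero_lt_one R.less_irrefl)
  show "primeB B p" unfolding primeB_def
  proof (intro conjI allI impI)
    show "\<one> \<prec> p" by (rule h(1))
    fix d e assume de: "d \<otimes> e = p"
    hence "d \<noteq> \<zero>" "e \<noteq> \<zero>" using pz mul0 mul0l by auto
    hence "d \<preceq> d \<otimes> e" "e \<preceq> d \<otimes> e" using le_mul_self le_mul_self2 one_le_iff by blast+
    thus "d = \<one> \<or> d = p" using h(2) de by auto
  qed
qed (auto simp: primeB_def)

lemma sat_fPrime[simp]: "k1 \<noteq> k2 \<Longrightarrow> k1 \<notin> trm_vars p \<Longrightarrow> k2 \<notin> trm_vars p \<Longrightarrow>
   sat B e (fPrime p k1 k2) = primeB B (evt B e p)"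
  unfolding prime_char by (simp add: fPrime_def)

end

section \<open>Matrix entries and the internal matrix product\<close>

definition fCodeEntry :: "trm \<Rightarrow> trm \<Rightarrow> trm \<Rightarrow> trm \<Rightarrow> trm \<Rightarrow> trm \<Rightarrow> fm" where
  "fCodeEntry a c n p r w =
    Disj (Conj (Neg (Eq w Zero)) (fExLt 11 n (fLetBeta 12 a c (Var 11) 13 (fTriple p r w (Var 12) 14))))
         (Conj (Eq w Zero) (Neg (BEx 15 a (fExLt 11 n (fLetBeta 12 a c (Var 11) 13 (fTriple p r (Var 15) (Var 12) 14))))))"

lemma delta0_fCodeEntry[simp]: "delta0 (fCodeEntry a c n p r w)" by (simp add: fCodeEntry_def)

context isigma1_model begin

text \<open>Zero entries are not stored in a code; their absence is stated with a quantifier bounded by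
  \<open>a\<close>, so that reading an entry is \<open>\<Delta>0\<close>.\<close>

definition code_entry :: "'b \<Rightarrow> 'b \<Rightarrow> 'b \<Rightarrow> 'b \<Rightarrow> 'b \<Rightarrow> 'b \<Rightarrow> bool" where
  "code_entry a c n p r w \<longleftrightarrow> (w \<noteq> \<zero> \<and> (\<exists>i. i \<prec> n \<and> beta B a c i = triple B p r w)) \<or>
     (w = \<zero> \<and> \<not> (\<exists>w'. w' \<preceq> a \<and> (\<exists>i. i \<prec> n \<and> beta B a c i = triple B p r w')))"

lemma sat_fCodeEntry[simp]:
  assumes "{11, 12, 13, 14, 15} \<inter> (trm_vars a \<union> trm_vars c \<union> trm_vars n \<union> trm_vars p \<union> trm_vars r \<union> trm_vars w) = {}"
  shows "sat B e (fCodeEntry a c n p r w) =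
    code_entry (evt B e a) (evt B e c) (evt B e n) (evt B e p) (evt B e r) (evt B e w)"
  using assms unfolding fCodeEntry_def code_entry_def by (simp add: eq_commute[of "triple B _ _ _"])

definition entry_triples :: "'b mat \<Rightarrow> 'b \<Rightarrow> 'b set" where
  "entry_triples X J = {triple B p q (X p q) | p q. primeB B p \<and> primeB B q \<and> lt B q J \<and> X p q \<noteq> zer B}"

definition codes :: "'b \<Rightarrow> 'b \<Rightarrow> 'b \<Rightarrow> 'b set \<Rightarrow> bool" where
  "codes a c n S \<longleftrightarrow> S = {x. \<exists>i. lt B i n \<and> x = beta B a c i}"

lemma good_codes: "good B X \<Longrightarrow> \<exists>a c n. codes a c n (entry_triples X J)"
  unfolding good_def entry_triples_def codes_def coded_def by blast

lemma good_outside: "good B X \<Longrightarrow> \<not> (primeB B p \<and> primeB B q) \<Longrightarrow> X p q = \<zero>"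
  unfolding good_def by blast

lemma codes_le: "codes a c n S \<Longrightarrow> x \<in> S \<Longrightarrow> x \<preceq> a"
  unfolding codes_def using beta_le by auto

lemma entry_triple_in:
  assumes "good B X" "X p q \<noteq> \<zero>" "q \<prec> J"
  shows "triple B p q (X p q) \<in> entry_triples X J" "primeB B p" "primeB B q"
  using assms good_outside unfolding entry_triples_def by blast+

lemma entry_le_code:
  assumes g: "good B X" and c: "codes a c n (entry_triples X J)" and q: "q \<prec> J"
  shows "X p q \<preceq> a"
proof (cases "X p q = \<zero>")
  case True thus ?thesis using zero_le by simp
next
  case False
  hence "triple B p q (X p q) \<preceq> a" using entry_triple_in[OF g False q] codes_le[OF c] by blast
  thus ?thesis using triple_ge R.order_trans by blast
qed

lemma code_entry_iff:
  assumes g: "good B X" and c: "codes a c n (entry_triples X J)" and q: "r \<prec> J"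
  shows "code_entry a c n p r w \<longleftrightarrow> w = X p r"
proof -
  have mem: "(\<exists>i. i \<prec> n \<and> beta B a c i = t) \<longleftrightarrow> t \<in> entry_triples X J" for t
    using c unfolding codes_def by auto
  have inS: "triple B p r w \<in> entry_triples X J \<longleftrightarrow> w = X p r \<and> w \<noteq> \<zero>" for w
  proof
    assume "triple B p r w \<in> entry_triples X J"
    then obtain p' q' where "triple B p r w = triple B p' q' (X p' q')" "X p' q' \<noteq> \<zero>"
      unfolding entry_triples_def by blast
    thus "w = X p r \<and> w \<noteq> \<zero>" using triple_inj by metis
  next
    assume "w = X p r \<and> w \<noteq> \<zero>"
    thus "triple B p r w \<in> entry_triples X J" using entry_triple_in[OF g _ q] by blast
  qed
  show ?thesis
  proof
    assume "code_entry a c n p r w"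
    hence "(w \<noteq> \<zero> \<and> triple B p r w \<in> entry_triples X J) \<or> (w = \<zero> \<and> \<not> (\<exists>w'. w' \<preceq> a \<and> triple B p r w' \<in> entry_triples X J))"
      unfolding code_entry_def mem .
    thus "w = X p r"
    proof (elim disjE)
      assume "w \<noteq> \<zero> \<and> triple B p r w \<in> entry_triples X J" thus ?thesis using inS by blast
    next
      assume h: "w = \<zero> \<and> \<not> (\<exists>w'. w' \<preceq> a \<and> triple B p r w' \<in> entry_triples X J)"
      show "w = X p r"
      proof (rule ccontr)
        assume "w \<noteq> X p r"
        hence "X p r \<noteq> \<zero>" using h by simp
        hence "X p r \<preceq> a" "triple B p r (X p r) \<in> entry_triples X J" using entry_le_code[OF g c q] entry_triple_in[OF g _ q] by auto
        thus False using h by blast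
      qed
    qed
  next
    assume w: "w = X p r"
    show "code_entry a c n p r w" unfolding code_entry_def mem inS using w by auto
  qed
qed

definition mmul_term :: "'b mat \<Rightarrow> 'b mat \<Rightarrow> 'b \<Rightarrow> 'b \<Rightarrow> 'b \<Rightarrow> 'b" where
  "mmul_term X Y p q = (\<lambda>r. if primeB B r then X p r \<otimes> Y r q else \<zero>)"

lemma good_column_bounded:
  assumes g: "good B Y" shows "\<exists>K. \<forall>r. Y r q \<noteq> \<zero> \<longrightarrow> r \<prec> K"
proof -
  obtain a c n where c: "codes a c n (entry_triples Y (q \<oplus> \<one>))" using good_codes[OF g] by blast
  have "r \<prec> a \<oplus> \<one>" if "Y r q \<noteq> \<zero>" for r
  proof -
    have "triple B r q (Y r q) \<preceq> a" using entry_triple_in[OF g that] codes_le[OF c] le_imp_lt_succ R.order_refl by blast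
    thus ?thesis using triple_ge(1) R.order_trans le_imp_lt_succ by blast
  qed
  thus ?thesis by blast
qed

lemma mmul_eq_bsum:
  assumes p: "primeB B p" and q: "primeB B q" and supp: "\<forall>r. Y r q \<noteq> \<zero> \<longrightarrow> r \<prec> K"
    and s: "bsum B (mmul_term X Y p q) K s"
  shows "mmul B X Y p q = s"
proof -
  have "(THE s. \<exists>K. (\<forall>r. Y r q \<noteq> \<zero> \<longrightarrow> r \<prec> K) \<and>
          bsum B (\<lambda>r. if primeB B r then X p r \<otimes> Y r q else \<zero>) K s) = s"
  proof (rule the_equality)
    show "\<exists>K. (\<forall>r. Y r q \<noteq> \<zero> \<longrightarrow> r \<prec> K) \<and> bsum B (\<lambda>r. if primeB B r then X p r \<otimes> Y r q else \<zero>) K s"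
      using supp s unfolding mmul_term_def by blast
  next
    fix s' assume "\<exists>K. (\<forall>r. Y r q \<noteq> \<zero> \<longrightarrow> r \<prec> K) \<and> bsum B (\<lambda>r. if primeB B r then X p r \<otimes> Y r q else \<zero>) K s'"
    then obtain K' where supp': "\<forall>r. Y r q \<noteq> \<zero> \<longrightarrow> r \<prec> K'" and s': "bsum B (mmul_term X Y p q) K' s'"
      unfolding mmul_term_def by blast
    have z: "mmul_term X Y p q i = \<zero>" if "Y i q = \<zero>" for i using that unfolding mmul_term_def by (simp add: mul0)
    show "s' = s"
    proof (cases "K \<preceq> K'")
      case True
      have "s = s'" using bsum_extend[OF s s' True] z supp R.not_le by blast
      thus ?thesis by simp
    next
      case False
      hence "K' \<preceq> K" using le_lin by blast
      thus "s' = s" using bsum_extend[OF s' s] z supp' R.not_le by blast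
    qed
  qed
  thus ?thesis unfolding mmul_def using p q by simp
qed

text \<open>Entries of \<open>X\<close> in columns below \<open>K\<close> and of column \<open>q\<close> of \<open>Y\<close> can be read off from codes, so
  the summands of the internal product are \<open>\<Delta>0\<close>-definable once truncated at \<open>K\<close>.\<close>

lemma mmul_term_truncated_delta0:
  assumes gX: "good B X" and gY: "good B Y"
  shows "delta0_fun (\<lambda>r. if r \<prec> K then mmul_term X Y p q r else \<zero>)"
proof -
  obtain aX cX nX where cX: "codes aX cX nX (entry_triples X K)" using good_codes[OF gX] by blast
  obtain aY cY nY where cY: "codes aY cY nY (entry_triples Y (q \<oplus> \<one>))" using good_codes[OF gY] by blast
  have qq: "q \<prec> q \<oplus> \<one>" using le_imp_lt_succ R.order_refl by blast
  let ?\<phi> = "Disj (Conj (Neg (fLt (Var 0) (Var 26))) (Eq (Var 1) Zero))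
       (Conj (fLt (Var 0) (Var 26))
          (Disj (Conj (Neg (fPrime (Var 0) 2 3)) (Eq (Var 1) Zero))
                (Conj (fPrime (Var 0) 2 3) (BEx 4 (Var 20) (BEx 5 (Var 23)
                   (Conj (fCodeEntry (Var 20) (Var 21) (Var 22) (Var 27) (Var 0) (Var 4))
                   (Conj (fCodeEntry (Var 23) (Var 24) (Var 25) (Var 0) (Var 28) (Var 5))
                         (Eq (Var 1) (Times (Var 4) (Var 5))))))))))"
  define e where "e = (\<lambda>_::nat. \<zero>)(20 := aX, 21 := cX, 22 := nX, 23 := aY, 24 := cY, 25 := nY, 26 := K, 27 := p, 28 := q)"
  show ?thesis unfolding delta0_fun_def
  proof (intro exI[of _ ?\<phi>] exI[of _ e] conjI allI)
    show "delta0 ?\<phi>" by simp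
    fix f :: "nat \<Rightarrow> 'b"
    define r where "r = f 0"
    define x where "x = f 1"
    have "sat B (local_env e f) ?\<phi> = ((\<not> r \<prec> K \<and> x = \<zero>) \<or> (r \<prec> K \<and> ((\<not> primeB B r \<and> x = \<zero>) \<or>
        (primeB B r \<and> (\<exists>w1. w1 \<preceq> aX \<and> (\<exists>w2. w2 \<preceq> aY \<and> code_entry aX cX nX p r w1 \<and> code_entry aY cY nY r q w2 \<and> x = w1 \<otimes> w2))))))"
      unfolding r_def x_def e_def by simp
    also have "\<dots> = (x = (if r \<prec> K then mmul_term X Y p q r else \<zero>))"
    proof (cases "r \<prec> K")
      case True
      have "(\<exists>w1. w1 \<preceq> aX \<and> (\<exists>w2. w2 \<preceq> aY \<and> code_entry aX cX nX p r w1 \<and> code_entry aY cY nY r q w2 \<and> x = w1 \<otimes> w2))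
            = (x = X p r \<otimes> Y r q)"
        using code_entry_iff[OF gX cX True] code_entry_iff[OF gY cY qq] entry_le_code[OF gX cX True]
          entry_le_code[OF gY cY qq] by auto
      thus ?thesis using True unfolding mmul_term_def by auto
    qed simp
    finally show "sat B (local_env e f) ?\<phi> = (f 1 = (if f 0 \<prec> K then mmul_term X Y p q (f 0) else \<zero>))"
      unfolding r_def x_def .
  qed
qed

lemma mmul_bsum_exists:
  assumes "good B X" and "good B Y"
  shows "\<exists>s. bsum B (mmul_term X Y p q) K s"
proof -
  let ?g = "\<lambda>r. if r \<prec> K then mmul_term X Y p q r else \<zero>"
  obtain s where "bsum B ?g K s"
    using bsum_exists mmul_term_truncated_delta0[OF assms] by blast
  moreover have "bsum B ?g K s = bsum B (mmul_term X Y p q) K s"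
    by (rule bsum_cong) simp
  ultimately show ?thesis by blast
qed

lemma mmul_term_perturb_row:
  assumes p: "primeB B p" and pK: "p \<prec> K"
    and Ed: "E p p \<oplus> \<alpha> = M p p \<oplus> \<beta>" and Eo: "\<And>r. r \<noteq> p \<Longrightarrow> E p r = M p r"
    and s1: "bsum B (mmul_term E F p q) K s1" and s2: "bsum B (mmul_term M F p q) K s2"
  shows "s1 \<oplus> \<alpha> \<otimes> F p q = s2 \<oplus> \<beta> \<otimes> F p q"
proof (rule bsum_perturb[OF s1 s2 pK])
  show "\<And>i. i \<prec> K \<Longrightarrow> i \<noteq> p \<Longrightarrow> mmul_term E F p q i = mmul_term M F p q i"
    unfolding mmul_term_def using Eo by simp
  have "mmul_term E F p q p \<oplus> \<alpha> \<otimes> F p q = (E p p \<oplus> \<alpha>) \<otimes> F p q" unfolding mmul_term_def using p by (simp add: distr)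
  also have "\<dots> = (M p p \<oplus> \<beta>) \<otimes> F p q" using Ed by simp
  also have "\<dots> = mmul_term M F p q p \<oplus> \<beta> \<otimes> F p q" unfolding mmul_term_def using p by (simp add: distr)
  finally show "mmul_term E F p q p \<oplus> \<alpha> \<otimes> F p q = mmul_term M F p q p \<oplus> \<beta> \<otimes> F p q" .
qed

lemma mmul_term_perturb_col:
  assumes q: "primeB B q" and qK: "q \<prec> K"
    and Fd: "F q q \<oplus> \<gamma> = N q q \<oplus> \<delta>" and Fo: "\<And>r. r \<noteq> q \<Longrightarrow> F r q = N r q"
    and s1: "bsum B (mmul_term M F p q) K s1" and s2: "bsum B (mmul_term M N p q) K s2"
  shows "s1 \<oplus> M p q \<otimes> \<gamma> = s2 \<oplus> M p q \<otimes> \<delta>"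
proof (rule bsum_perturb[OF s1 s2 qK])
  show "\<And>i. i \<prec> K \<Longrightarrow> i \<noteq> q \<Longrightarrow> mmul_term M F p q i = mmul_term M N p q i"
    unfolding mmul_term_def using Fo by simp
  have "mmul_term M F p q q \<oplus> M p q \<otimes> \<gamma> = M p q \<otimes> (F q q \<oplus> \<gamma>)" unfolding mmul_term_def using q by (simp add: distl)
  also have "\<dots> = M p q \<otimes> (N q q \<oplus> \<delta>)" using Fd by simp
  also have "\<dots> = mmul_term M N p q q \<oplus> M p q \<otimes> \<delta>" unfolding mmul_term_def using q by (simp add: distl)
  finally show "mmul_term M F p q q \<oplus> M p q \<otimes> \<gamma> = mmul_term M N p q q \<oplus> M p q \<otimes> \<delta>" .
qed

text \<open>If \<open>E\<close> agrees with \<open>M\<close> in row \<open>p\<close> except that \<open>E p p - M p p = \<beta> - \<alpha>\<close>, and \<open>F\<close> agrees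
  with \<open>N\<close> in column \<open>q\<close> except that \<open>F q q - N q q = \<delta> - \<gamma>\<close>, then
  \<open>(EF) p q - (MN) p q = (\<beta> - \<alpha>) F p q + (\<delta> - \<gamma>) M p q\<close>, written below without subtraction.\<close>

lemma mmul_diag_shift:
  assumes gE: "good B E" and gF: "good B F" and gM: "good B M" and gN: "good B N"
    and p: "primeB B p" and q: "primeB B q"
    and Ed: "E p p \<oplus> \<alpha> = M p p \<oplus> \<beta>" and Eo: "\<And>r. r \<noteq> p \<Longrightarrow> E p r = M p r"
    and Fd: "F q q \<oplus> \<gamma> = N q q \<oplus> \<delta>" and Fo: "\<And>r. r \<noteq> q \<Longrightarrow> F r q = N r q"
  shows "mmul B E F p q \<oplus> \<alpha> \<otimes> F p q \<oplus> \<gamma> \<otimes> M p q = mmul B M N p q \<oplus> \<delta> \<otimes> M p q \<oplus> \<beta> \<otimes> F p q"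
proof -
  obtain KF where KF: "\<forall>r. F r q \<noteq> \<zero> \<longrightarrow> r \<prec> KF" using good_column_bounded[OF gF] by blast
  obtain KN where KN: "\<forall>r. N r q \<noteq> \<zero> \<longrightarrow> r \<prec> KN" using good_column_bounded[OF gN] by blast
  define K where "K = (KF \<oplus> KN) \<oplus> (p \<oplus> q) \<oplus> \<one>"
  have "KF \<preceq> K" "KN \<preceq> K" unfolding K_def using le_add_self le_add_self2 R.order_trans by meson+
  hence suppF: "\<forall>r. F r q \<noteq> \<zero> \<longrightarrow> r \<prec> K" and suppN: "\<forall>r. N r q \<noteq> \<zero> \<longrightarrow> r \<prec> K"
    using KF KN R.less_le_trans by blast+
  have "p \<preceq> (KF \<oplus> KN) \<oplus> (p \<oplus> q)" "q \<preceq> (KF \<oplus> KN) \<oplus> (p \<oplus> q)"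
    using le_add_self le_add_self2 R.order_trans by meson+
  hence pK: "p \<prec> K" and qK: "q \<prec> K" unfolding K_def using le_imp_lt_succ by blast+
  obtain sEF where sEF: "bsum B (mmul_term E F p q) K sEF" using mmul_bsum_exists[OF gE gF] by blast
  obtain sMF where sMF: "bsum B (mmul_term M F p q) K sMF" using mmul_bsum_exists[OF gM gF] by blast
  obtain sMN where sMN: "bsum B (mmul_term M N p q) K sMN" using mmul_bsum_exists[OF gM gN] by blast
  have row: "sEF \<oplus> \<alpha> \<otimes> F p q = sMF \<oplus> \<beta> \<otimes> F p q"
    by (rule mmul_term_perturb_row[OF p pK Ed Eo sEF sMF])
  have col: "sMF \<oplus> M p q \<otimes> \<gamma> = sMN \<oplus> M p q \<otimes> \<delta>"
    by (rule mmul_term_perturb_col[OF q qK Fd Fo sMF sMN])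
  have "sEF \<oplus> \<alpha> \<otimes> F p q \<oplus> \<gamma> \<otimes> M p q = (sMF \<oplus> \<beta> \<otimes> F p q) \<oplus> \<gamma> \<otimes> M p q" by (simp only: row)
  also have "\<dots> = (sMF \<oplus> M p q \<otimes> \<gamma>) \<oplus> \<beta> \<otimes> F p q" by (simp add: semiring_simps)
  also have "\<dots> = (sMN \<oplus> M p q \<otimes> \<delta>) \<oplus> \<beta> \<otimes> F p q" by (simp only: col)
  finally show ?thesis
    using mmul_eq_bsum[OF p q suppF sEF] mmul_eq_bsum[OF p q suppN sMN] by (simp add: semiring_simps)
qed

lemma shifted_products_cancel:
  assumes X: "X \<oplus> \<alpha> \<otimes> F \<oplus> \<gamma> \<otimes> M = S \<oplus> \<delta> \<otimes> M \<oplus> \<beta> \<otimes> F"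
    and W: "W \<oplus> (\<alpha> \<otimes> N \<oplus> \<gamma> \<otimes> M) = S \<oplus> \<beta> \<otimes> N \<oplus> \<delta> \<otimes> M"
    and F: "F \<oplus> \<gamma>' = N \<oplus> \<delta>'"
  shows "X \<oplus> (\<alpha> \<otimes> \<delta>' \<oplus> \<beta> \<otimes> \<gamma>') = W \<oplus> (\<beta> \<otimes> \<delta>' \<oplus> \<alpha> \<otimes> \<gamma>')"
proof -
  have "(X \<oplus> (\<alpha> \<otimes> \<delta>' \<oplus> \<beta> \<otimes> \<gamma>')) \<oplus> (\<alpha> \<otimes> N \<oplus> \<gamma> \<otimes> M)
      = (X \<oplus> \<alpha> \<otimes> (N \<oplus> \<delta>') \<oplus> \<gamma> \<otimes> M) \<oplus> \<beta> \<otimes> \<gamma>'" by (simp add: semiring_simps)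
  also have "\<dots> = (X \<oplus> \<alpha> \<otimes> F \<oplus> \<gamma> \<otimes> M) \<oplus> (\<alpha> \<otimes> \<gamma>' \<oplus> \<beta> \<otimes> \<gamma>')"
    unfolding F[symmetric] by (simp add: semiring_simps)
  also have "\<dots> = (S \<oplus> \<delta> \<otimes> M \<oplus> \<beta> \<otimes> (F \<oplus> \<gamma>')) \<oplus> \<alpha> \<otimes> \<gamma>'"
    unfolding X by (simp add: semiring_simps)
  also have "\<dots> = (S \<oplus> \<beta> \<otimes> N \<oplus> \<delta> \<otimes> M) \<oplus> (\<beta> \<otimes> \<delta>' \<oplus> \<alpha> \<otimes> \<gamma>')"
    unfolding F by (simp add: semiring_simps)
  also have "\<dots> = (W \<oplus> (\<beta> \<otimes> \<delta>' \<oplus> \<alpha> \<otimes> \<gamma>')) \<oplus> (\<alpha> \<otimes> N \<oplus> \<gamma> \<otimes> M)"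
    unfolding W[symmetric] by (simp add: semiring_simps)
  finally show ?thesis by (rule add_cancel_right)
qed

lemma diag_shift_entry_iff:
  assumes gM: "good B M" and c: "codes a c n (entry_triples M J)"
    and Eo: "\<And>p q. \<not> (primeB B p \<and> p = q) \<Longrightarrow> E p q = M p q"
    and Ed: "\<And>p. primeB B p \<Longrightarrow> E p p \<oplus> \<alpha> = M p p \<oplus> \<beta>"
    and p: "primeB B p" and q: "q \<prec> J"
  shows "((p \<noteq> q \<and> code_entry a c n p q v) \<or>
      (p = q \<and> (\<exists>w. w \<preceq> v \<oplus> \<alpha> \<and> code_entry a c n p p w \<and> v \<oplus> \<alpha> = w \<oplus> \<beta>))) \<longleftrightarrow> v = E p q"
proof (cases "p = q")
  case False thus ?thesis using code_entry_iff[OF gM c q] Eo by auto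
next
  case True
  have "(\<exists>w. w \<preceq> v \<oplus> \<alpha> \<and> code_entry a c n p p w \<and> v \<oplus> \<alpha> = w \<oplus> \<beta>) \<longleftrightarrow> v \<oplus> \<alpha> = M p p \<oplus> \<beta>"
    using code_entry_iff[OF gM c, of p p] q True le_add_self by auto
  also have "\<dots> \<longleftrightarrow> v = E p p" using Ed[OF p] add_cancel_right by metis
  finally show ?thesis using True by simp
qed

lemma diag_shift_entry_triples_delta0:
  assumes gM: "good B M"
    and Eo: "\<And>p q. \<not> (primeB B p \<and> p = q) \<Longrightarrow> E p q = M p q"
    and Ed: "\<And>p. primeB B p \<Longrightarrow> E p p \<oplus> \<alpha> = M p p \<oplus> \<beta>"
  shows "delta0_set (\<lambda>x. x \<in> entry_triples E J)"
proof -
  obtain a c n where c: "codes a c n (entry_triples M J)" using good_codes[OF gM] by blast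
  let ?\<phi> = "BEx 2 (Var 0) (BEx 3 (Var 0) (BEx 4 (Var 0) (Conj (fTriple (Var 2) (Var 3) (Var 4) (Var 0) 8)
     (Conj (fPrime (Var 2) 6 7) (Conj (fPrime (Var 3) 6 7) (Conj (fLt (Var 3) (Var 23)) (Conj (Neg (Eq (Var 4) Zero))
     (Disj (Conj (Neg (Eq (Var 2) (Var 3))) (fCodeEntry (Var 20) (Var 21) (Var 22) (Var 2) (Var 3) (Var 4)))
           (Conj (Eq (Var 2) (Var 3)) (BEx 5 (Plus (Var 4) (Var 24))
              (Conj (fCodeEntry (Var 20) (Var 21) (Var 22) (Var 2) (Var 2) (Var 5))
                    (Eq (Plus (Var 4) (Var 24)) (Plus (Var 5) (Var 25))))))))))))))"
  define e where "e = (\<lambda>_::nat. \<zero>)(20 := a, 21 := c, 22 := n, 23 := J, 24 := \<alpha>, 25 := \<beta>)"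
  show ?thesis unfolding delta0_set_def
  proof (intro exI[of _ ?\<phi>] exI[of _ e] conjI allI)
    show "delta0 ?\<phi>" by simp
    fix f :: "nat \<Rightarrow> 'b"
    have key: "((p \<noteq> q \<and> code_entry a c n p q v) \<or>
        (p = q \<and> (\<exists>w. w \<preceq> v \<oplus> \<alpha> \<and> code_entry a c n p p w \<and> v \<oplus> \<alpha> = w \<oplus> \<beta>))) \<longleftrightarrow> v = E p q"
      if "primeB B p" "q \<prec> J" for p q v
      using diag_shift_entry_iff[OF gM c Eo Ed that] .
    have "sat B (local_env e f) ?\<phi> = (\<exists>p. p \<preceq> f 0 \<and> (\<exists>q. q \<preceq> f 0 \<and> (\<exists>v. v \<preceq> f 0 \<and>
        f 0 = triple B p q v \<and> primeB B p \<and> primeB B q \<and> q \<prec> J \<and> v \<noteq> \<zero> \<and>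
        ((p \<noteq> q \<and> code_entry a c n p q v) \<or>
         (p = q \<and> (\<exists>w. w \<preceq> v \<oplus> \<alpha> \<and> code_entry a c n p p w \<and> v \<oplus> \<alpha> = w \<oplus> \<beta>))))))"
      unfolding e_def by simp
    also have "\<dots> = (\<exists>p q v. f 0 = triple B p q v \<and> primeB B p \<and> primeB B q \<and> q \<prec> J \<and> v \<noteq> \<zero> \<and> v = E p q)"
      (is "?L = ?R")
    proof
      assume ?L thus ?R using key by blast
    next
      assume ?R
      then obtain p q v where h: "f 0 = triple B p q v" "primeB B p" "primeB B q" "q \<prec> J" "v \<noteq> \<zero>"
        "v = E p q" by blast
      moreover have "p \<preceq> f 0" "q \<preceq> f 0" "v \<preceq> f 0" using h(1) triple_ge by simp_all
      ultimately show ?L using key[OF h(2) h(4), of v] by blast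
    qed
    also have "\<dots> = (f 0 \<in> entry_triples E J)" unfolding entry_triples_def by auto
    finally show "sat B (local_env e f) ?\<phi> = (f 0 \<in> entry_triples E J)" .
  qed
qed

lemma diag_shift_entry_triples_bounded:
  assumes gM: "good B M" and c: "codes a c n (entry_triples M J)"
    and Eo: "\<And>p q. \<not> (primeB B p \<and> p = q) \<Longrightarrow> E p q = M p q"
    and Ed: "\<And>p. primeB B p \<Longrightarrow> E p p \<oplus> \<alpha> = M p p \<oplus> \<beta>"
    and x: "x \<in> entry_triples E J"
  shows "x \<prec> (a \<oplus> triple B J J (a \<oplus> \<beta>)) \<oplus> \<one>"
proof -
  obtain p q where h: "x = triple B p q (E p q)" "primeB B p" "primeB B q" "q \<prec> J" "E p q \<noteq> \<zero>"
    using x unfolding entry_triples_def by blast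
  have "x \<preceq> a \<oplus> triple B J J (a \<oplus> \<beta>)"
  proof (cases "p = q")
    case False
    hence "x \<in> entry_triples M J" using h Eo unfolding entry_triples_def by auto
    thus ?thesis using codes_le[OF c] le_add_self R.order_trans by blast
  next
    case True
    have "E p p \<preceq> E p p \<oplus> \<alpha>" by (rule le_add_self)
    also have "\<dots> = M p p \<oplus> \<beta>" using Ed h(2) by blast
    also have "\<dots> \<preceq> a \<oplus> \<beta>" using entry_le_code[OF gM c] h(4) True R.add_right_mono by blast
    finally have "E p p \<preceq> a \<oplus> \<beta>" .
    moreover have "p \<preceq> J" using h(4) True R.less_imp_le by blast
    ultimately have "x \<preceq> triple B J J (a \<oplus> \<beta>)" using h(1) True triple_mono by blast
    thus ?thesis using le_add_self2 R.order_trans by blast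
  qed
  thus ?thesis by (rule le_imp_lt_succ)
qed

text \<open>The entry triples of \<open>E\<close> form a bounded set that is \<open>\<Delta>0\<close>-definable from a code for those
  of \<open>M\<close>.\<close>

lemma good_diag_shift:
  assumes gM: "good B M"
    and Eo: "\<And>p q. \<not> (primeB B p \<and> p = q) \<Longrightarrow> E p q = M p q"
    and Ed: "\<And>p. primeB B p \<Longrightarrow> E p p \<oplus> \<alpha> = M p p \<oplus> \<beta>"
  shows "good B E"
proof -
  have "coded B (entry_triples E J)" for J
  proof -
    obtain a c n where c: "codes a c n (entry_triples M J)" using good_codes[OF gM] by blast
    have "coded B {x. x \<in> entry_triples E J}"
      using bounded_delta0_set_coded diag_shift_entry_triples_delta0[OF gM Eo Ed]
        diag_shift_entry_triples_bounded[OF gM c Eo Ed] by blast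
    thus ?thesis by simp
  qed
  moreover have "E p q = \<zero>" if "\<not> (primeB B p \<and> primeB B q)" for p q
  proof -
    have "\<not> (primeB B p \<and> p = q)" using that by blast
    thus ?thesis using Eo good_outside[OF gM that] by simp
  qed
  ultimately show ?thesis unfolding good_def entry_triples_def by blast
qed

lemma shift_mult:
  assumes y: "y \<oplus> \<alpha> = Y \<oplus> \<beta>" and z: "z \<oplus> \<gamma> = Z \<oplus> \<delta>"
    and W: "W \<oplus> (\<alpha> \<otimes> Z \<oplus> \<gamma> \<otimes> Y) = Y \<otimes> Z \<oplus> \<beta> \<otimes> Z \<oplus> \<delta> \<otimes> Y"
  shows "y \<otimes> z \<oplus> (\<alpha> \<otimes> \<delta> \<oplus> \<beta> \<otimes> \<gamma>) = W \<oplus> (\<beta> \<otimes> \<delta> \<oplus> \<alpha> \<otimes> \<gamma>)"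
proof -
  define T where "T = \<gamma> \<otimes> y \<oplus> \<alpha> \<otimes> z \<oplus> \<alpha> \<otimes> \<gamma> \<oplus> \<gamma> \<otimes> \<alpha>"
  have "(y \<otimes> z \<oplus> (\<alpha> \<otimes> \<delta> \<oplus> \<beta> \<otimes> \<gamma>)) \<oplus> T = (y \<oplus> \<alpha>) \<otimes> (z \<oplus> \<gamma>) \<oplus> (\<alpha> \<otimes> \<delta> \<oplus> \<beta> \<otimes> \<gamma> \<oplus> \<gamma> \<otimes> \<alpha>)"
    unfolding T_def by (simp add: semiring_simps)
  also have "\<dots> = (Y \<oplus> \<beta>) \<otimes> (Z \<oplus> \<delta>) \<oplus> (\<alpha> \<otimes> \<delta> \<oplus> \<beta> \<otimes> \<gamma> \<oplus> \<gamma> \<otimes> \<alpha>)" by (simp only: y z)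
  also have "\<dots> = (Y \<otimes> Z \<oplus> \<beta> \<otimes> Z \<oplus> \<delta> \<otimes> Y) \<oplus> (\<beta> \<otimes> \<delta> \<oplus> \<alpha> \<otimes> \<gamma>) \<oplus> (\<alpha> \<otimes> \<delta> \<oplus> \<beta> \<otimes> \<gamma>)"
    by (simp add: semiring_simps)
  also have "\<dots> = (W \<oplus> (\<beta> \<otimes> \<delta> \<oplus> \<alpha> \<otimes> \<gamma>)) \<oplus> (\<gamma> \<otimes> (Y \<oplus> \<beta>) \<oplus> \<alpha> \<otimes> (Z \<oplus> \<delta>))"
    unfolding W[symmetric] by (simp add: semiring_simps)
  also have "\<dots> = (W \<oplus> (\<beta> \<otimes> \<delta> \<oplus> \<alpha> \<otimes> \<gamma>)) \<oplus> T"
    unfolding y[symmetric] z[symmetric] T_def by (simp add: semiring_simps)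
  finally show ?thesis by (rule add_cancel_right)
qed

lemma num_le_nonstandard_summand:
  assumes "\<not> standard B (num B a \<oplus> u)" shows "num B c \<preceq> u"
proof -
  have "\<not> standard B u"
  proof
    assume "standard B u"
    moreover have "standard B (num B a)" unfolding standard_def by blast
    ultimately show False using assms standard_add by blast
  qed
  thus ?thesis using num_lt_nonstandard R.less_imp_le by blast
qed

lemma num_cross_le_mult:
  assumes ny: "a \<noteq> 0 \<Longrightarrow> \<not> standard B y" and nz: "c \<noteq> 0 \<Longrightarrow> \<not> standard B z"
  shows "num B a \<otimes> z \<oplus> num B c \<otimes> y \<preceq> y \<otimes> z"
proof (cases "a = 0 \<or> c = 0")
  case True
  have A: "num B a \<otimes> z \<preceq> y \<otimes> z" if "a \<noteq> 0"
    using mul_le_mono num_lt_nonstandard[OF ny[OF that]] R.less_imp_le by blast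
  have C: "num B c \<otimes> y \<preceq> y \<otimes> z" if "c \<noteq> 0"
    using mul_le_mono[of "num B c" z y] num_lt_nonstandard[OF nz[OF that]] R.less_imp_le mul_comm by metis
  show ?thesis
  proof (cases "a = 0"; cases "c = 0")
    assume "a = 0" "c \<noteq> 0"
    thus ?thesis using C by (simp add: mul0l add0l)
  next
    assume "a \<noteq> 0" "c = 0"
    thus ?thesis using A by (simp add: mul0l add0)
  qed (use True in \<open>simp_all add: mul0l add0 zero_le\<close>)
next
  case False
  hence a: "a \<noteq> 0" and c: "c \<noteq> 0" by auto
  obtain u where u: "y = num B a \<oplus> u"
    using num_lt_nonstandard[OF ny[OF a]] R.less_imp_le le_add_ex by blast
  obtain v where v: "z = num B c \<oplus> v"
    using num_lt_nonstandard[OF nz[OF c]] R.less_imp_le le_add_ex by blast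
  have cu: "num B c \<preceq> u" using num_le_nonstandard_summand ny[OF a] u by blast
  have av: "num B a \<preceq> v" using num_le_nonstandard_summand nz[OF c] v by blast
  have "(num B a \<otimes> num B c \<oplus> num B a \<otimes> v \<oplus> num B c \<otimes> u) \<oplus> num B c \<otimes> num B a
      \<preceq> (num B a \<otimes> num B c \<oplus> num B a \<otimes> v \<oplus> num B c \<otimes> u) \<oplus> u \<otimes> v"
    using mono_mul2[OF cu av] by (rule R.add_left_mono)
  thus ?thesis unfolding u v by (simp add: semiring_simps)
qed
end

lemma coded_empty:
  assumes "PAminus B" shows "coded B {}"
proof -
  have "\<not> lt B i (zer B)" for i
  proof
    assume "lt B i (zer B)"
    moreover have "le B (zer B) i" "\<forall>x y. le B x y \<and> le B y x \<longrightarrow> x = y"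
      using assms unfolding PAminus_def by metis+
    ultimately show False unfolding lt_def by blast
  qed
  then show ?thesis unfolding coded_def by blast
qed

lemma good_mzero: "PAminus B \<Longrightarrow> good B (mzero B)"
  unfolding good_def mzero_def using coded_empty by simp

lemma ext_eps_without_primes:
  assumes "\<nexists>p. primeB B p" and "good B (eps (Oof B Os y))"
  shows "ext_eps B Os eps y = mzero B"
  using assms unfolding ext_eps_def Let_def good_def mzero_def by auto

section \<open>The extension of \<open>eps\<close>\<close>

locale eps_extension = isigma1_model +
  fixes A Os and eps
  assumes A_substr: "substr B A" and Os_subset: "Os \<subseteq> A" and zero_Os: "zer B \<in> Os"
    and Os_closed: "\<forall>x\<in>Os. \<forall>y\<in>Os. ad B x y \<in> Os \<and> monus B x y \<in> Os \<and> mu B x y \<in> Os"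
    and O_unique: "\<forall>y\<in>A. \<exists>!w. w \<in> Os \<and> simB B y w"
    and eps_good_all: "\<forall>Q\<in>Os. good B (eps Q)"
    and eps_zero: "eps (zer B) = mzero B"
    and eps_hom: "\<forall>Q\<in>Os. \<forall>R\<in>Os. eps (ad B Q R) = madd B (eps Q) (eps R)
                      \<and> eps (monus B Q R) = mmonus B (eps Q) (eps R)
                      \<and> eps (mu B Q R) = mmul B (eps Q) (eps R)"
    and eps_diag_nonstandard: "\<forall>Q\<in>Os. Q \<noteq> zer B \<longrightarrow> (\<forall>p. primeB B p \<longrightarrow> \<not> standard B (eps Q p p))"
begin

abbreviation O_of where "O_of y \<equiv> Oof B Os y"
abbreviation eps_ext where "eps_ext y \<equiv> ext_eps B Os eps y"

lemma Os_add: "x \<in> Os \<Longrightarrow> y \<in> Os \<Longrightarrow> x \<oplus> y \<in> Os" using Os_closed by blast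
lemma Os_monus: "x \<in> Os \<Longrightarrow> y \<in> Os \<Longrightarrow> monus B x y \<in> Os" using Os_closed by blast
lemma Os_mul: "x \<in> Os \<Longrightarrow> y \<in> Os \<Longrightarrow> x \<otimes> y \<in> Os" using Os_closed by blast
lemma eps_add: "x \<in> Os \<Longrightarrow> y \<in> Os \<Longrightarrow> eps (x \<oplus> y) p q = eps x p q \<oplus> eps y p q"
  using eps_hom unfolding madd_def by metis
lemma eps_mul: "x \<in> Os \<Longrightarrow> y \<in> Os \<Longrightarrow> eps (x \<otimes> y) = mmul B (eps x) (eps y)"
  using eps_hom by blast
lemma A_add: "x \<in> A \<Longrightarrow> y \<in> A \<Longrightarrow> x \<oplus> y \<in> A" using A_substr unfolding substr_def by blast
lemma A_mul: "x \<in> A \<Longrightarrow> y \<in> A \<Longrightarrow> x \<otimes> y \<in> A" using A_substr unfolding substr_def by blast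
lemma zero_A: "\<zero> \<in> A" using A_substr unfolding substr_def by blast
lemma one_A: "\<one> \<in> A" using A_substr unfolding substr_def by blast

lemma O_of_props: "y \<in> A \<Longrightarrow> O_of y \<in> Os \<and> simB B y (O_of y)"
  unfolding Oof_def by (rule theI'[OF O_unique[rule_format]])

lemma O_of_eqI: "y \<in> A \<Longrightarrow> w \<in> Os \<Longrightarrow> simB B y w \<Longrightarrow> O_of y = w"
  unfolding Oof_def by (rule the1_equality[OF O_unique[rule_format]]) auto

text \<open>\<open>u - w = b - a\<close> with \<open>a, b\<close> standard, i.e. the paper's \<open>\<delta>\<close> without negative numbers.\<close>

definition num_shift :: "'a \<Rightarrow> 'a \<Rightarrow> nat \<Rightarrow> nat \<Rightarrow> bool" where
  "num_shift u w a b \<longleftrightarrow> u \<oplus> num B a = w \<oplus> num B b"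

lemma sim_imp_num_shift: "simB B u w \<Longrightarrow> \<exists>a b. num_shift u w a b \<and> (a = 0 \<or> b = 0)"
proof -
  assume "simB B u w"
  then obtain n where "u = w \<oplus> num B n \<or> w = u \<oplus> num B n" unfolding simB_def by blast
  thus ?thesis
  proof
    assume "u = w \<oplus> num B n" hence "num_shift u w 0 n" unfolding num_shift_def by (simp add: add0)
    thus ?thesis by blast
  next
    assume "w = u \<oplus> num B n" hence "num_shift u w n 0" unfolding num_shift_def by (simp add: add0)
    thus ?thesis by blast
  qed
qed

lemma num_shift_imp_sim: "num_shift u w a b \<Longrightarrow> simB B u w"
proof -
  assume h: "num_shift u w a b"
  show ?thesis
  proof (cases "a \<le> b")
    case True
    then obtain d where "b = a + d" using le_Suc_ex by blast
    hence "u \<oplus> num B a = (w \<oplus> num B d) \<oplus> num B a" using h unfolding num_shift_def by (simp add: num_add semiring_simps)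
    hence "u = w \<oplus> num B d" by (rule add_cancel_right)
    thus ?thesis unfolding simB_def by blast
  next
    case False
    then obtain d where "a = b + d" using le_Suc_ex by (metis le_add_diff_inverse nat_le_linear)
    hence "(u \<oplus> num B d) \<oplus> num B b = w \<oplus> num B b" using h unfolding num_shift_def by (simp add: num_add semiring_simps)
    hence "w = u \<oplus> num B d" by (metis add_cancel_right)
    thus ?thesis unfolding simB_def by blast
  qed
qed

lemma num_shift_O_of: "y \<in> A \<Longrightarrow> \<exists>a b. num_shift y (O_of y) a b \<and> (a = 0 \<or> b = 0)"
  using O_of_props sim_imp_num_shift by blast

lemma Os_standard: "Q \<in> Os \<Longrightarrow> standard B Q \<Longrightarrow> Q = \<zero>"
proof -
  assume Q: "Q \<in> Os" "standard B Q"
  then obtain n where n: "Q = num B n" unfolding standard_def by blast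
  have "simB B Q \<zero>" unfolding simB_def using n by (auto simp: add0l)
  moreover have "simB B Q Q" unfolding simB_def by (intro exI[of _ 0]) (simp add: add0)
  ultimately show ?thesis using O_unique Q(1) zero_Os Os_subset by blast
qed

lemma num_lt_eps_diag: "Q \<in> Os \<Longrightarrow> Q \<noteq> \<zero> \<Longrightarrow> primeB B p \<Longrightarrow> num B n \<prec> eps Q p p"
  using eps_diag_nonstandard num_lt_nonstandard by blast

lemma ext_eps_diag: "primeB B p \<Longrightarrow> eps_ext y p p = (if O_of y \<preceq> y then eps (O_of y) p p \<oplus> monus B y (O_of y)
     else monus B (eps (O_of y) p p) (monus B (O_of y) y))"
  unfolding ext_eps_def Let_def by simp

lemma ext_eps_off_diag: "\<not> (primeB B p \<and> p = q) \<Longrightarrow> eps_ext y p q = eps (O_of y) p q"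
  unfolding ext_eps_def Let_def by auto

text \<open>When \<open>y < O_y\<close> the diagonal is decreased by truncated subtraction; this is exact because
  \<open>O_y \<noteq> 0\<close> and so the diagonal entries of \<open>eps O_y\<close> are nonstandard.\<close>

lemma ext_diag_num_shift:
  assumes u: "u \<in> A" and r: "num_shift u (O_of u) a b" and p: "primeB B p"
  shows "eps_ext u p p \<oplus> num B a = eps (O_of u) p p \<oplus> num B b"
proof -
  define Ou where "Ou = O_of u"
  have Ou: "Ou \<in> Os" using O_of_props u unfolding Ou_def by blast
  have r': "u \<oplus> num B a = Ou \<oplus> num B b" using r unfolding num_shift_def Ou_def .
  show ?thesis
  proof (cases "Ou \<preceq> u")
    case True
    then obtain d where d: "u = Ou \<oplus> d" using le_add_ex by blast
    hence md: "monus B u Ou = d" using monus_eq by simp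
    have "Ou \<oplus> (d \<oplus> num B a) = Ou \<oplus> num B b" using r' d by (simp add: add_assoc)
    hence da: "d \<oplus> num B a = num B b" by (rule add_cancel_left)
    have "eps_ext u p p = eps Ou p p \<oplus> d" using ext_eps_diag[OF p] True md unfolding Ou_def by simp
    thus ?thesis using da unfolding Ou_def[symmetric] by (simp add: add_assoc)
  next
    case False
    hence uO: "u \<prec> Ou" using R.not_le by blast
    then obtain d where d: "Ou = u \<oplus> d" using le_add_ex R.less_imp_le by blast
    hence md: "monus B Ou u = d" using monus_eq by simp
    have "u \<oplus> num B a = u \<oplus> (d \<oplus> num B b)" using r' d by (simp add: add_assoc)
    hence ad: "num B a = d \<oplus> num B b" by (rule add_cancel_left)
    hence "d \<preceq> num B a" using le_add_self by simp
    then obtain m where m: "d = num B m" using le_num_eq_num by blast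
    have "Ou \<noteq> \<zero>" using uO zero_le R.not_le by (metis R.le_less_trans R.less_irrefl)
    hence "d \<prec> eps Ou p p" using num_lt_eps_diag[OF Ou _ p] m by blast
    hence inv: "monus B (eps Ou p p) d \<oplus> d = eps Ou p p" using monus_add_inv R.less_imp_le by blast
    have "eps_ext u p p = monus B (eps Ou p p) d" using ext_eps_diag[OF p] False md unfolding Ou_def by simp
    hence "eps_ext u p p \<oplus> num B a = (monus B (eps Ou p p) d \<oplus> d) \<oplus> num B b" unfolding ad by (simp add: add_assoc)
    thus ?thesis using inv unfolding Ou_def[symmetric] by simp
  qed
qed

lemma eps_good: "Q \<in> Os \<Longrightarrow> good B (eps Q)" using eps_good_all by blast

lemma O_of_in: "y \<in> A \<Longrightarrow> O_of y \<in> Os" using O_of_props by blast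

lemma ext_eps_good:
  assumes y: "y \<in> A" shows "good B (eps_ext y)"
proof -
  obtain a b where "num_shift y (O_of y) a b" using num_shift_O_of y by blast
  from good_diag_shift[OF eps_good[OF O_of_in[OF y]] ext_eps_off_diag ext_diag_num_shift[OF y this]]
  show ?thesis .
qed

lemma ext_eps_outside: "y \<in> A \<Longrightarrow> \<not> (primeB B p \<and> primeB B q) \<Longrightarrow> eps_ext y p q = \<zero>"
  using ext_eps_good good_outside by blast

lemma O_of_add:
  assumes y: "y \<in> A" and z: "z \<in> A"
    and ry: "num_shift y (O_of y) a b" and rz: "num_shift z (O_of z) c d"
  shows "O_of (y \<oplus> z) = O_of y \<oplus> O_of z" and "num_shift (y \<oplus> z) (O_of y \<oplus> O_of z) (a + c) (b + d)"
proof -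
  have "(y \<oplus> z) \<oplus> num B (a + c) = (y \<oplus> num B a) \<oplus> (z \<oplus> num B c)" by (simp add: num_add semiring_simps)
  also have "\<dots> = (O_of y \<oplus> num B b) \<oplus> (O_of z \<oplus> num B d)" using ry rz unfolding num_shift_def by simp
  also have "\<dots> = (O_of y \<oplus> O_of z) \<oplus> num B (b + d)" by (simp add: num_add semiring_simps)
  finally show shift: "num_shift (y \<oplus> z) (O_of y \<oplus> O_of z) (a + c) (b + d)" unfolding num_shift_def .
  show "O_of (y \<oplus> z) = O_of y \<oplus> O_of z"
    using O_of_eqI[OF A_add[OF y z] Os_add[OF O_of_in[OF y] O_of_in[OF z]] num_shift_imp_sim[OF shift]] .
qed

lemma ext_eps_add:
  assumes y: "y \<in> A" and z: "z \<in> A"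
  shows "eps_ext (y \<oplus> z) = madd B (eps_ext y) (eps_ext z)"
proof -
  obtain a b where ry: "num_shift y (O_of y) a b" using num_shift_O_of y by blast
  obtain c d where rz: "num_shift z (O_of z) c d" using num_shift_O_of z by blast
  note O_yz = O_of_add[OF y z ry rz]
  have eps_O: "eps (O_of (y \<oplus> z)) p q = eps (O_of y) p q \<oplus> eps (O_of z) p q" for p q
    unfolding O_yz(1) using eps_add O_of_in y z by blast
  show ?thesis unfolding madd_def
  proof (intro ext)
    fix p q
    show "eps_ext (y \<oplus> z) p q = eps_ext y p q \<oplus> eps_ext z p q"
    proof (cases "primeB B p \<and> p = q")
      case True
      hence p: "primeB B p" and pq: "q = p" by auto
      have "eps_ext (y \<oplus> z) p p \<oplus> num B (a + c) = eps (O_of (y \<oplus> z)) p p \<oplus> num B (b + d)"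
        using ext_diag_num_shift[OF A_add[OF y z] _ p] O_yz by simp
      also have "\<dots> = (eps (O_of y) p p \<oplus> num B b) \<oplus> (eps (O_of z) p p \<oplus> num B d)"
        unfolding eps_O by (simp add: num_add semiring_simps)
      also have "\<dots> = (eps_ext y p p \<oplus> num B a) \<oplus> (eps_ext z p p \<oplus> num B c)"
        using ext_diag_num_shift[OF y ry p] ext_diag_num_shift[OF z rz p] by simp
      also have "\<dots> = (eps_ext y p p \<oplus> eps_ext z p p) \<oplus> num B (a + c)" by (simp add: num_add semiring_simps)
      finally show ?thesis using pq add_cancel_right by blast
    next
      case False
      thus ?thesis using ext_eps_off_diag eps_O by simp
    qed
  qed
qed

lemma O_of_zero: "O_of \<zero> = \<zero>"
  using O_of_eqI[OF zero_A zero_Os] unfolding simB_def by (metis add0 num0)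

lemma O_of_one: "O_of \<one> = \<zero>"
proof -
  have "simB B \<one> \<zero>" unfolding simB_def using num1 add0l by metis
  thus ?thesis using O_of_eqI[OF one_A zero_Os] by blast
qed

lemma ext_eps_zero: "eps_ext \<zero> = mzero B"
proof (intro ext)
  fix p q
  show "eps_ext \<zero> p q = mzero B p q"
  proof (cases "primeB B p \<and> p = q")
    case True
    hence "eps_ext \<zero> p q = eps \<zero> p p \<oplus> monus B \<zero> \<zero>" using ext_eps_diag O_of_zero R.order_refl by auto
    thus ?thesis using eps_zero monus_le[OF R.order_refl] unfolding mzero_def by (simp add: add0)
  next
    case False thus ?thesis using ext_eps_off_diag O_of_zero eps_zero by simp
  qed
qed

lemma ext_eps_one: "eps_ext \<one> = mid B"
proof (intro ext)
  fix p q
  show "eps_ext \<one> p q = mid B p q"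
  proof (cases "primeB B p \<and> p = q")
    case True
    hence "eps_ext \<one> p q = eps \<zero> p p \<oplus> monus B \<one> \<zero>" using ext_eps_diag O_of_one zero_le by auto
    moreover have "monus B \<one> \<zero> = \<one>" using monus_eq[of \<zero> \<one> \<one>] add0l by simp
    ultimately show ?thesis using eps_zero True unfolding mzero_def mid_def by (auto simp: add0l)
  next
    case False thus ?thesis using ext_eps_off_diag O_of_one eps_zero unfolding mid_def mzero_def by simp
  qed
qed

lemma num_mult_Os: "Q \<in> Os \<Longrightarrow> num B k \<otimes> Q \<in> Os \<and> eps (num B k \<otimes> Q) = (\<lambda>p q. num B k \<otimes> eps Q p q)"
proof (induction k)
  case 0 thus ?case using zero_Os eps_zero unfolding mzero_def by (simp add: mul0l)
next
  case (Suc k)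
  have eq: "num B (Suc k) \<otimes> Q = num B k \<otimes> Q \<oplus> Q" by (simp add: distr mul1l)
  have "num B k \<otimes> Q \<in> Os" using Suc by blast
  hence "num B (Suc k) \<otimes> Q \<in> Os" unfolding eq using Os_add Suc.prems by blast
  moreover have "eps (num B (Suc k) \<otimes> Q) = (\<lambda>p q. num B (Suc k) \<otimes> eps Q p q)"
  proof (intro ext)
    fix p q
    have "eps (num B (Suc k) \<otimes> Q) p q = eps (num B k \<otimes> Q) p q \<oplus> eps Q p q"
      unfolding eq using eps_add \<open>num B k \<otimes> Q \<in> Os\<close> Suc.prems by blast
    also have "\<dots> = num B (Suc k) \<otimes> eps Q p q" using Suc by (simp add: distr mul1l)
    finally show "eps (num B (Suc k) \<otimes> Q) p q = num B (Suc k) \<otimes> eps Q p q" .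
  qed
  ultimately show ?case by blast
qed

text \<open>\<open>O\<close> is only closed under truncated subtraction. It is exact here: nonzero elements of \<open>O\<close> are
  nonstandard, so the cross terms with standard coefficients are dominated by \<open>Y Z\<close>.\<close>

lemma mult_combination_in_Os:
  assumes Y: "Y \<in> Os" and Z: "Z \<in> Os" and "a \<noteq> 0 \<Longrightarrow> Y \<noteq> \<zero>" and "c \<noteq> 0 \<Longrightarrow> Z \<noteq> \<zero>"
  shows "\<exists>W\<in>Os. W \<oplus> (num B a \<otimes> Z \<oplus> num B c \<otimes> Y) = Y \<otimes> Z \<oplus> num B b \<otimes> Z \<oplus> num B d \<otimes> Y"
proof -
  define T where "T = Y \<otimes> Z \<oplus> num B b \<otimes> Z \<oplus> num B d \<otimes> Y"
  define R where "R = num B a \<otimes> Z \<oplus> num B c \<otimes> Y"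
  have num_Os: "num B k \<otimes> Q \<in> Os" if "Q \<in> Os" for k Q using num_mult_Os that by blast
  have T: "T \<in> Os" and R: "R \<in> Os" unfolding T_def R_def by (intro Os_add Os_mul num_Os Y Z)+
  have "R \<preceq> Y \<otimes> Z" unfolding R_def
    by (rule num_cross_le_mult) (use Os_standard Y Z assms in blast)+
  moreover have "Y \<otimes> Z \<preceq> T" unfolding T_def using le_add_self add_assoc by metis
  ultimately have "R \<preceq> T" by (rule R.order_trans)
  hence "monus B T R \<oplus> R = T" by (rule monus_add_inv)
  thus ?thesis using Os_monus[OF T R] unfolding T_def R_def by blast
qed

lemma O_of_mult:
  assumes y: "y \<in> A" and z: "z \<in> A"
    and ry: "num_shift y (O_of y) a b" and rz: "num_shift z (O_of z) c d" and W: "W \<in> Os"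
    and W_eq: "W \<oplus> (num B a \<otimes> O_of z \<oplus> num B c \<otimes> O_of y)
      = O_of y \<otimes> O_of z \<oplus> num B b \<otimes> O_of z \<oplus> num B d \<otimes> O_of y"
  shows "O_of (y \<otimes> z) = W" and "num_shift (y \<otimes> z) W (a * d + b * c) (b * d + a * c)"
proof -
  have "y \<otimes> z \<oplus> (num B a \<otimes> num B d \<oplus> num B b \<otimes> num B c) = W \<oplus> (num B b \<otimes> num B d \<oplus> num B a \<otimes> num B c)"
    by (rule shift_mult[OF ry[unfolded num_shift_def] rz[unfolded num_shift_def] W_eq])
  thus shift: "num_shift (y \<otimes> z) W (a * d + b * c) (b * d + a * c)"
    unfolding num_shift_def by (simp add: num_add num_mult)
  show "O_of (y \<otimes> z) = W" using O_of_eqI[OF A_mul[OF y z] W num_shift_imp_sim[OF shift]] .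
qed

lemma eps_mult_combination:
  assumes Y: "Y \<in> Os" and Z: "Z \<in> Os" and W: "W \<in> Os"
    and W_eq: "W \<oplus> (num B a \<otimes> Z \<oplus> num B c \<otimes> Y) = Y \<otimes> Z \<oplus> num B b \<otimes> Z \<oplus> num B d \<otimes> Y"
  shows "eps W p q \<oplus> (num B a \<otimes> eps Z p q \<oplus> num B c \<otimes> eps Y p q)
    = mmul B (eps Y) (eps Z) p q \<oplus> num B b \<otimes> eps Z p q \<oplus> num B d \<otimes> eps Y p q"
proof -
  have in_Os: "num B k \<otimes> Q \<in> Os" "Y \<otimes> Z \<in> Os" "Y \<otimes> Z \<oplus> num B k \<otimes> Z \<in> Os" if "Q \<in> Os" for k Q
    using num_mult_Os Os_mul Os_add Y Z that by blast+
  have "eps W p q \<oplus> eps (num B a \<otimes> Z \<oplus> num B c \<otimes> Y) p q = eps (W \<oplus> (num B a \<otimes> Z \<oplus> num B c \<otimes> Y)) p q"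
    using eps_add[OF W Os_add[OF in_Os(1)[OF Z] in_Os(1)[OF Y]]] by simp
  also have "\<dots> = eps (Y \<otimes> Z \<oplus> num B b \<otimes> Z \<oplus> num B d \<otimes> Y) p q" by (simp only: W_eq)
  also have "\<dots> = mmul B (eps Y) (eps Z) p q \<oplus> num B b \<otimes> eps Z p q \<oplus> num B d \<otimes> eps Y p q"
    using eps_add[OF in_Os(3)[OF Y] in_Os(1)[OF Y]] eps_add[OF in_Os(2)[OF Y] in_Os(1)[OF Z]]
      eps_mul[OF Y Z] num_mult_Os[OF Y] num_mult_Os[OF Z] by simp
  finally show ?thesis
    using eps_add[OF in_Os(1)[OF Z] in_Os(1)[OF Y]] num_mult_Os[OF Y] num_mult_Os[OF Z] by simp
qed

lemma num_shift_nonzero: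
  assumes "num_shift u w a 0" and "a \<noteq> 0" shows "w \<noteq> \<zero>"
proof
  assume "w = \<zero>"
  hence "u \<oplus> num B a = \<zero>" using assms(1) unfolding num_shift_def by (simp add: add0)
  hence "num B a \<preceq> \<zero>" using le_add_self2[of "num B a" u] by simp
  thus False using le_antisym zero_le num_nonzero[OF assms(2)] by blast
qed

lemma ext_eps_mult_entry:
  assumes y: "y \<in> A" and z: "z \<in> A" and p: "primeB B p" and q: "primeB B q"
  shows "mmul B (eps_ext y) (eps_ext z) p q = eps_ext (y \<otimes> z) p q"
proof -
  obtain a b where ry: "num_shift y (O_of y) a b" "a = 0 \<or> b = 0" using num_shift_O_of y by blast
  obtain c d where rz: "num_shift z (O_of z) c d" "c = 0 \<or> d = 0" using num_shift_O_of z by blast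
  obtain W where W: "W \<in> Os" and W_eq: "W \<oplus> (num B a \<otimes> O_of z \<oplus> num B c \<otimes> O_of y)
      = O_of y \<otimes> O_of z \<oplus> num B b \<otimes> O_of z \<oplus> num B d \<otimes> O_of y"
  proof -
    have "O_of y \<noteq> \<zero>" if "a \<noteq> 0"
      using num_shift_nonzero[of y "O_of y" a] ry that by (cases "b = 0") auto
    moreover have "O_of z \<noteq> \<zero>" if "c \<noteq> 0"
      using num_shift_nonzero[of z "O_of z" c] rz that by (cases "d = 0") auto
    ultimately show ?thesis using mult_combination_in_Os[OF O_of_in[OF y] O_of_in[OF z]] that by blast
  qed
  note O_yz = O_of_mult[OF y z ry(1) rz(1) W W_eq]
  have prod: "mmul B (eps_ext y) (eps_ext z) p q \<oplus> num B a \<otimes> eps_ext z p q \<oplus> num B c \<otimes> eps (O_of y) p q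
      = mmul B (eps (O_of y)) (eps (O_of z)) p q \<oplus> num B d \<otimes> eps (O_of y) p q \<oplus> num B b \<otimes> eps_ext z p q"
    by (rule mmul_diag_shift[OF ext_eps_good[OF y] ext_eps_good[OF z] eps_good[OF O_of_in[OF y]]
          eps_good[OF O_of_in[OF z]] p q ext_diag_num_shift[OF y ry(1) p] ext_eps_off_diag
          ext_diag_num_shift[OF z rz(1) q] ext_eps_off_diag]) (use p q in auto)
  note comb = eps_mult_combination[OF O_of_in[OF y] O_of_in[OF z] W W_eq, of p q]
  show ?thesis
  proof (cases "p = q")
    case True
    have "eps_ext z p q \<oplus> num B c = eps (O_of z) p q \<oplus> num B d"
      using ext_diag_num_shift[OF z rz(1) q] True by simp
    from shifted_products_cancel[OF prod comb this]
    have "mmul B (eps_ext y) (eps_ext z) p p \<oplus> num B (a * d + b * c) = eps W p p \<oplus> num B (b * d + a * c)"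
      using True by (simp add: num_add num_mult)
    also have "\<dots> = eps_ext (y \<otimes> z) p p \<oplus> num B (a * d + b * c)"
      using ext_diag_num_shift[OF A_mul[OF y z] _ p] O_yz by simp
    finally show ?thesis using True add_cancel_right by blast
  next
    case False
    have "eps_ext z p q \<oplus> \<zero> = eps (O_of z) p q \<oplus> \<zero>" using ext_eps_off_diag False by simp
    from shifted_products_cancel[OF prod comb this]
    have "mmul B (eps_ext y) (eps_ext z) p q = eps W p q" by (simp add: mul0 add0)
    thus ?thesis using ext_eps_off_diag False O_yz by simp
  qed
qed

lemma ext_eps_mult: "y \<in> A \<Longrightarrow> z \<in> A \<Longrightarrow> eps_ext (y \<otimes> z) = mmul B (eps_ext y) (eps_ext z)"
proof (intro ext)
  fix p q assume y: "y \<in> A" and z: "z \<in> A"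
  show "eps_ext (y \<otimes> z) p q = mmul B (eps_ext y) (eps_ext z) p q"
  proof (cases "primeB B p \<and> primeB B q")
    case True thus ?thesis using ext_eps_mult_entry[OF y z] by simp
  next
    case False
    hence "eps_ext (y \<otimes> z) p q = \<zero>" using ext_eps_outside A_mul y z by blast
    moreover have "mmul B (eps_ext y) (eps_ext z) p q = \<zero>" unfolding mmul_def using False by auto
    ultimately show ?thesis by simp
  qed
qed

theorem ext_eps_semiring_hom:
  "(\<forall>y\<in>A. good B (eps_ext y)) \<and> eps_ext \<zero> = mzero B \<and> eps_ext \<one> = mid B \<and>
   (\<forall>y\<in>A. \<forall>z\<in>A. eps_ext (y \<oplus> z) = madd B (eps_ext y) (eps_ext z) \<and> eps_ext (y \<otimes> z) = mmul B (eps_ext y) (eps_ext z))"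
  using ext_eps_good ext_eps_zero ext_eps_one ext_eps_add ext_eps_mult by blast

end

theorem lemma3p6:
  fixes B :: "'b Lstr" and A Os :: "'b set" and eps :: "'b \<Rightarrow> 'b mat"
  assumes "ISigma1 B"
    and "substr B A"
    and "Os \<subseteq> A"
    and "zer B \<in> Os"
    and "\<forall>x\<in>Os. \<forall>y\<in>Os. ad B x y \<in> Os \<and> monus B x y \<in> Os \<and> mu B x y \<in> Os"
    and "\<forall>y\<in>A. \<exists>!w. w \<in> Os \<and> simB B y w"
    and "\<forall>Q\<in>Os. good B (eps Q)"
    and "eps (zer B) = mzero B"
    and "\<forall>Q\<in>Os. \<forall>R\<in>Os. eps (ad B Q R) = madd B (eps Q) (eps R)
                      \<and> eps (monus B Q R) = mmonus B (eps Q) (eps R)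
                      \<and> eps (mu B Q R) = mmul B (eps Q) (eps R)"
    and "\<forall>Q\<in>Os. Q \<noteq> zer B \<longrightarrow> (\<forall>p. primeB B p \<longrightarrow> \<not> standard B (eps Q p p))"
  shows "(\<forall>y\<in>A. good B (ext_eps B Os eps y))
       \<and> ext_eps B Os eps (zer B) = mzero B
       \<and> ext_eps B Os eps (on B) = mid B
       \<and> (\<forall>y\<in>A. \<forall>z\<in>A.
            ext_eps B Os eps (ad B y z) = madd B (ext_eps B Os eps y) (ext_eps B Os eps z)
          \<and> ext_eps B Os eps (mu B y z) = mmul B (ext_eps B Os eps y) (ext_eps B Os eps z))"
proof (cases "\<exists>p. primeB B p")
  case True
  then have "isigma1_model B"
    using assms(1) unfolding primeB_def by (intro isigma1_model.intro) blast+
  then have "eps_extension B A Os eps"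
    by (rule eps_extension.intro, unfold eps_extension_axioms_def) (use assms in blast)
  then show ?thesis by (rule eps_extension.ext_eps_semiring_hom)
next
  case False
  have PA: "PAminus B" using assms(1) unfolding ISigma1_def by blast
  have "Oof B Os y \<in> Os" if "y \<in> A" for y
    using theI'[OF assms(6)[rule_format, OF that]] unfolding Oof_def by blast
  then have ext_zero: "ext_eps B Os eps y = mzero B" if "y \<in> A" for y
    using ext_eps_without_primes[OF False] assms(7) that by blast
  have in_A: "zer B \<in> A" "on B \<in> A" "\<forall>y\<in>A. \<forall>z\<in>A. ad B y z \<in> A \<and> mu B y z \<in> A"
    using assms(2) unfolding substr_def by auto
  have "mid B = mzero B" "mmul B M N = mzero B" for M N
    using False unfolding mid_def mmul_def mzero_def by auto
  moreover have "madd B (mzero B) (mzero B) = mzero B"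
  proof -
    have "\<forall>x. ad B x (zer B) = x" using PA unfolding PAminus_def by metis
    then show ?thesis unfolding madd_def mzero_def by simp
  qed
  ultimately show ?thesis
    using ext_zero in_A good_mzero[OF PA] by auto
qed

end
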